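(* $\mathrm{PRT}\subset\mathrm{PRT[O]}\subseteq\mathrm{PRT[T,O]}$ and $\mathrm{PRT}\subset\mathrm{PRT[T]}\subseteq\mathrm{PRT[T,O]}$, where $\subset$ denotes proper inclusion.
   Context: An indexed family is a sequence $\mathcal F=(F_n)_{n\in\mathbb N}$ of subsets of $\mathbb N$ that is uniformly computably enumerable; a set may occur with several indices, and $F\in\mathcal F$ means $F=F_n$ for some $n$. The minimal index $\mathrm{mi}_{\mathcal F}(F)$ is the least $n$ with $F_n=F$. An enumeration of a nonempty set $A$ is an infinite sequence of elements of $A$ in which every element of $A$ occurs; $f\restriction n$ is its initial segment of length $n$, and $\mathrm{content}(\sigma)$ is the set of entries of a finite string $\sigma$. A learner is a partial computable function from finite strings of natural numbers to natural numbers (hypotheses); hypothesis $h$ is interpreted as $F_h$. $M$ converges to a correct index on an enumeration $f$ of $F$ if there is $i$ with $M(f\restriction j)=M(f\restriction i)$ for all $j\ge i$ and $F_{M(f\restriction i)}=F$. $\mathcal F$ is PRT-learnable if there are a learner $M$ and a polynomial $p$ such that for every $F\in\mathcal F$ and every enumeration $f$ of $F$, $M$ converges to a correct index on $f$ in fewer than $p(\mathrm{mi}_{\mathcal F}(F))$ computation steps; if an oracle is used, the number of oracle queries is also bounded by $p(\mathrm{mi}_{\mathcal F}(F))$. A teacher is a computable map $T$ from finite strings to finite strings such that $T(\sigma)$ is a prefix of $T(\tau)$ whenever $\sigma$ is a prefix of $\tau$, and $\mathrm{content}(T(\sigma))\subseteq\mathrm{content}(\sigma)$. $\mathcal F$ is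 PRT[O]-learnable if some learner with access to a membership oracle for the target set PRT-learns it; PRT[T]-learnable if there is a learner-teacher pair $(M,T)$ such that $M$, fed with $T(f\restriction n)$ in place of $f\restriction n$ (i.e. on $T\circ f$), meets the PRT criterion for every enumeration $f$ of every member of $\mathcal F$ (only the learner's computation is counted); PRT[T,O]-learnable if as for PRT[T] but $M$ additionally has a membership oracle for the target and $T$ has access to the oracle answers $M$ receives. PRT, PRT[O], PRT[T], PRT[T,O] denote the classes of indexed families learnable in these senses. *)

theory Defs
  imports Main "HOL-Computational_Algebra.Polynomial" "HOL-Library.Sublist"
begin

text \<open>Tape alphabet: natural numbers, 0 = blank.  Natural numbers are written
  in binary, least significant bit first, with symbol 1 for bit 0 and symbol 2
  for bit 1; symbol 3 terminates a number; symbol 4 is used as a separator.\<close>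

fun bits :: "nat \<Rightarrow> nat list" where
  "bits n = (if n = 0 then [] else (n mod 2 + 1) # bits (n div 2))"

definition enc_str :: "nat list \<Rightarrow> nat list" where
  "enc_str \<sigma> = concat (map (\<lambda>x. bits x @ [3]) \<sigma>)"

text \<open>A machine: finite transition table (state, read symbol) to
  (new state, written symbol, move right?), plus a query state and the two
  answer states.\<close>

record tm =
  delta :: "((nat \<times> nat) \<times> (nat \<times> nat \<times> bool)) list"
  qquery :: nat
  qyes :: nat
  qno :: nat

type_synonym config = "nat \<times> nat \<times> (nat \<Rightarrow> nat)"  (* state, head, tape *)

definition num_at :: "(nat \<Rightarrow> nat) \<Rightarrow> nat \<Rightarrow> nat" where
  "num_at tp p = (let l = (LEAST k. tp (p + k) \<notin> {1, 2})
                  in (\<Sum>k<l. (tp (p + k) - 1) * 2 ^ k))"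

definition init_conf :: "nat list \<Rightarrow> config" where
  "init_conf w = (0, 0, \<lambda>i. if i < length w then w ! i else 0)"

definition step :: "nat set \<Rightarrow> tm \<Rightarrow> config \<Rightarrow> config option" where
  "step A M c = (case c of (q, h, tp) \<Rightarrow>
     if q = qquery M then Some (if num_at tp h \<in> A then qyes M else qno M, h, tp)
     else (case map_of (delta M) (q, tp h) of
             None \<Rightarrow> None
           | Some (q', s, d) \<Rightarrow> Some (q', if d then h + 1 else h - 1, tp(h := s))))"

fun run :: "nat set \<Rightarrow> tm \<Rightarrow> nat \<Rightarrow> config \<Rightarrow> config option" where
  "run A M 0 c = Some c"
| "run A M (Suc n) c = Option.bind (run A M n c) (step A M)"

definition halts_with :: "nat set \<Rightarrow> tm \<Rightarrow> nat list \<Rightarrow> nat \<Rightarrow> config \<Rightarrow> bool" where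
  "halts_with A M w t c \<longleftrightarrow> run A M t (init_conf w) = Some c \<and> step A M c = None"

definition queries :: "nat set \<Rightarrow> tm \<Rightarrow> nat list \<Rightarrow> nat \<Rightarrow> nat list" where
  "queries A M w t =
     concat (map (\<lambda>k. case the (run A M k (init_conf w)) of (q, h, tp) \<Rightarrow>
                        if q = qquery M then [2 * num_at tp h + (if num_at tp h \<in> A then 1 else 0)]
                        else []) [0..<t])"

definition tape_is :: "nat list \<Rightarrow> (nat \<Rightarrow> nat) \<Rightarrow> bool" where
  "tape_is u tp \<longleftrightarrow> (\<forall>i<length u. tp i = u ! i) \<and> tp (length u) = 0"

text \<open>Learner M with oracle A on string \<sigma> outputs hypothesis h using t steps and
  making the queries qs.  (Partial: undefined if M diverges or the final tape
  does not encode a number.)\<close>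
definition lresult :: "nat set \<Rightarrow> tm \<Rightarrow> nat list \<Rightarrow> (nat \<times> nat \<times> nat list) option" where
  "lresult A M \<sigma> =
     (if \<exists>h t c. halts_with A M (enc_str \<sigma>) t c \<and> tape_is (enc_str [h]) (snd (snd c))
      then Some (THE r. \<exists>h t c. r = (h, t, queries A M (enc_str \<sigma>) t) \<and>
                   halts_with A M (enc_str \<sigma>) t c \<and> tape_is (enc_str [h]) (snd (snd c)))
      else None)"

definition computes_str :: "tm \<Rightarrow> nat list \<Rightarrow> nat list \<Rightarrow> bool" where
  "computes_str T w \<tau> \<longleftrightarrow> (\<exists>t c. halts_with {} T w t c \<and> tape_is (enc_str \<tau>) (snd (snd c)))"

definition str_out :: "tm \<Rightarrow> nat list \<Rightarrow> nat list" where
  "str_out T w = (THE \<tau>. computes_str T w \<tau>)"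

definition indexed_family :: "(nat \<Rightarrow> nat set) \<Rightarrow> bool" where
  "indexed_family F \<longleftrightarrow> (\<exists>E. \<forall>n x. x \<in> F n \<longleftrightarrow> (\<exists>t c. halts_with {} E (enc_str [n, x]) t c))"

definition mi :: "(nat \<Rightarrow> nat set) \<Rightarrow> nat set \<Rightarrow> nat" where
  "mi F A = (LEAST n. F n = A)"

definition is_enum :: "(nat \<Rightarrow> nat) \<Rightarrow> nat set \<Rightarrow> bool" where
  "is_enum f A \<longleftrightarrow> range f = A"

definition prefix_of :: "(nat \<Rightarrow> nat) \<Rightarrow> nat \<Rightarrow> nat list" where
  "prefix_of f n = map f [0..<n]"

definition prt_conv :: "(nat \<Rightarrow> nat set) \<Rightarrow> nat set \<Rightarrow> nat poly \<Rightarrow>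
                        (nat \<Rightarrow> (nat \<times> nat \<times> nat list) option) \<Rightarrow> bool" where
  "prt_conv F A p res \<longleftrightarrow> (\<exists>i.
     (\<forall>j\<le>i. res j \<noteq> None) \<and>
     (\<forall>j\<ge>i. res j \<noteq> None \<and> fst (the (res j)) = fst (the (res i))) \<and>
     F (fst (the (res i))) = A \<and>
     (\<Sum>j\<le>i. fst (snd (the (res j)))) < poly p (mi F A) \<and>
     (\<Sum>j\<le>i. length (snd (snd (the (res j))))) \<le> poly p (mi F A))"

definition teacher :: "tm \<Rightarrow> bool" where
  "teacher T \<longleftrightarrow>
     (\<forall>\<sigma>. \<exists>\<tau>. computes_str T (enc_str \<sigma>) \<tau>) \<and>
     (\<forall>\<sigma> \<sigma>'. prefix \<sigma> \<sigma>' \<longrightarrow> prefix (str_out T (enc_str \<sigma>)) (str_out T (enc_str \<sigma>'))) \<and>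
     (\<forall>\<sigma>. set (str_out T (enc_str \<sigma>)) \<subseteq> set \<sigma>)"

text \<open>Teacher with access to the oracle answers received by the learner: input
  is the data string \<sigma> and the log L of (coded) queries and answers.\<close>
definition teach_in :: "nat list \<Rightarrow> nat list \<Rightarrow> nat list" where
  "teach_in \<sigma> L = enc_str \<sigma> @ [4] @ enc_str L"

definition teacherO :: "tm \<Rightarrow> bool" where
  "teacherO T \<longleftrightarrow>
     (\<forall>\<sigma> L. \<exists>\<tau>. computes_str T (teach_in \<sigma> L) \<tau>) \<and>
     (\<forall>\<sigma> \<sigma>' L L'. prefix \<sigma> \<sigma>' \<longrightarrow> prefix L L' \<longrightarrow>
        prefix (str_out T (teach_in \<sigma> L)) (str_out T (teach_in \<sigma>' L'))) \<and>
     (\<forall>\<sigma> L. set (str_out T (teach_in \<sigma> L)) \<subseteq> set \<sigma>)"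

fun tolog :: "tm \<Rightarrow> tm \<Rightarrow> nat set \<Rightarrow> (nat \<Rightarrow> nat) \<Rightarrow> nat \<Rightarrow> nat list option" where
  "tolog M T A f 0 = Some []"
| "tolog M T A f (Suc n) =
     (case tolog M T A f n of None \<Rightarrow> None
      | Some L \<Rightarrow> (case lresult A M (str_out T (teach_in (prefix_of f n) L)) of
                     None \<Rightarrow> None
                   | Some (h, t, qs) \<Rightarrow> Some (L @ qs)))"

definition to_res :: "tm \<Rightarrow> tm \<Rightarrow> nat set \<Rightarrow> (nat \<Rightarrow> nat) \<Rightarrow> nat \<Rightarrow> (nat \<times> nat \<times> nat list) option" where
  "to_res M T A f n = (case tolog M T A f n of None \<Rightarrow> None
                        | Some L \<Rightarrow> lresult A M (str_out T (teach_in (prefix_of f n) L)))"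

definition PRT :: "(nat \<Rightarrow> nat set) set" where
  "PRT = {F. indexed_family F \<and> (\<exists>M p. \<forall>A\<in>range F. \<forall>f. is_enum f A \<longrightarrow>
            prt_conv F A p (\<lambda>n. lresult {} M (prefix_of f n)))}"

definition PRT_O :: "(nat \<Rightarrow> nat set) set" where
  "PRT_O = {F. indexed_family F \<and> (\<exists>M p. \<forall>A\<in>range F. \<forall>f. is_enum f A \<longrightarrow>
            prt_conv F A p (\<lambda>n. lresult A M (prefix_of f n)))}"

definition PRT_T :: "(nat \<Rightarrow> nat set) set" where
  "PRT_T = {F. indexed_family F \<and> (\<exists>M T p. teacher T \<and> (\<forall>A\<in>range F. \<forall>f. is_enum f A \<longrightarrow>
            prt_conv F A p (\<lambda>n. lresult {} M (str_out T (enc_str (prefix_of f n))))))}"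

definition PRT_TO :: "(nat \<Rightarrow> nat set) set" where
  "PRT_TO = {F. indexed_family F \<and> (\<exists>M T p. teacherO T \<and> (\<forall>A\<in>range F. \<forall>f. is_enum f A \<longrightarrow>
            prt_conv F A p (to_res M T A f)))}"

end

theory Submission
  imports Defs
begin

text \<open>The inclusions are simulations. A learner without oracle becomes an oracle learner by
  turning its query state into a two-step detour into the `no' state, which at most doubles its
  running time; a teacher without oracle access becomes one that first erases the oracle log from
  its input.

  For the separations let the even indices name the set of numbers of even binary length and the
  odd indices the set of numbers of odd binary length. One query `is 1 in the target?' identifies
  the target, and so does a constant-time learner fed by a teacher that passes on the first datum
  only when its length is even. An unaided learner that converges on both sets within N steps,
  however, reads only the first N cells of its input. Data beginning with N copies of 2^(k+1),
  of even length, and data beginning with N copies of 2^k, of odd length, look alike on these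
  cells once k \<ge> N, so the learner ends with hypotheses of the same parity on both.\<close>

declare bits.simps[simp del]

lemma bits_0[simp]: "bits 0 = []"
  by (simp add: bits.simps)

lemma bits_nonzero: "n \<noteq> 0 \<Longrightarrow> bits n = (n mod 2 + 1) # bits (n div 2)"
  by (subst bits.simps) simp

lemma set_bits: "set (bits n) \<subseteq> {1, 2}"
proof (induction n rule: bits.induct)
  case (1 n)
  then show ?case by (cases "n = 0") (auto simp: bits_nonzero)
qed

lemma bits_nth: "i < length (bits n) \<Longrightarrow> bits n ! i \<in> {1, 2}"
  using set_bits nth_mem by blast

lemma inj_bits: "inj bits"
proof (rule injI)
  show "bits n = bits m \<Longrightarrow> n = m" for n m
  proof (induction n arbitrary: m rule: bits.induct)
    case (1 n)
    show ?case
    proof (cases "n = 0")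
      case True
      then show ?thesis using "1.prems" by (cases "m = 0") (auto simp: bits_nonzero)
    next
      case False
      then have "m \<noteq> 0" using "1.prems" by (cases "m = 0") (auto simp: bits_nonzero)
      with False "1.prems" have "n mod 2 = m mod 2" "bits (n div 2) = bits (m div 2)"
        by (auto simp: bits_nonzero)
      with "1.IH"[OF False] show ?thesis by (metis div_mult_mod_eq)
    qed
  qed
qed

lemma bits_power2: "bits (2 ^ k) = replicate k 1 @ [2]"
  by (induction k) (simp_all add: bits_nonzero)

lemma enc_str_Nil[simp]: "enc_str [] = []"
  by (simp add: enc_str_def)

lemma enc_str_Cons: "enc_str (x # xs) = bits x @ 3 # enc_str xs"
  by (simp add: enc_str_def)

lemma enc_str_single: "enc_str [h] = bits h @ [3]"
  by (simp add: enc_str_def)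

lemma set_enc_str: "set (enc_str xs) \<subseteq> {1, 2, 3}"
  using set_bits by (induction xs) (auto simp: enc_str_Cons)

lemma enc_str_nth: "i < length (enc_str xs) \<Longrightarrow> enc_str xs ! i \<in> {1, 2, 3}"
  using set_enc_str nth_mem by blast

lemma inj_enc_str: "inj enc_str"
proof (rule injI)
  show "enc_str xs = enc_str ys \<Longrightarrow> xs = ys" for xs ys
  proof (induction xs arbitrary: ys)
    case Nil
    then show ?case by (cases ys) (auto simp: enc_str_Cons)
  next
    case (Cons x xs)
    then obtain y ys' where ys: "ys = y # ys'" by (cases ys) (auto simp: enc_str_Cons)
    have no3: "c \<in> set (bits n) \<Longrightarrow> c \<noteq> 3" for c n using set_bits by fastforce
    have "takeWhile (\<lambda>c. c \<noteq> 3) (enc_str (n # zs)) = bits n"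
      and "dropWhile (\<lambda>c. c \<noteq> 3) (enc_str (n # zs)) = 3 # enc_str zs" for n zs
      using no3[of _ n] by (simp_all add: enc_str_Cons takeWhile_append2 dropWhile_append2)
    with Cons.prems ys have "bits x = bits y \<and> enc_str xs = enc_str ys'"
      by (metis list.inject)
    with Cons.IH ys inj_bits show ?case by (simp add: inj_eq)
  qed
qed

definition tape_of :: "nat list \<Rightarrow> nat \<Rightarrow> nat" where
  "tape_of w i = (if i < length w then w ! i else 0)"

lemma init_conf_tape_of: "init_conf w = (0, 0, tape_of w)"
  by (simp add: init_conf_def tape_of_def fun_eq_iff)

lemma tape_is_tape_of: "tape_is w (tape_of w)"
  by (simp add: tape_is_def tape_of_def)

lemma tape_of_enc_str_less: "tape_of (enc_str xs) i < 4"
  using enc_str_nth[of i xs] by (auto simp: tape_of_def)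

lemma tape_is_unique:
  assumes "tape_is u tp" "tape_is v tp" "0 \<notin> set u" "0 \<notin> set v"
  shows "u = v"
proof -
  have no_shorter: "\<not> length u < length v"
    if "tape_is u tp" "tape_is v tp" "0 \<notin> set v" for u v
  proof
    assume "length u < length v"
    then have "v ! length u \<in> set v" by (rule nth_mem)
    moreover have "v ! length u = 0"
      using that \<open>length u < length v\<close> by (simp add: tape_is_def)
    ultimately show False using that(3) by simp
  qed
  have "length u = length v"
    using no_shorter[OF assms(1,2,4)] no_shorter[OF assms(2,1,3)] by simp
  with assms(1,2) show ?thesis by (auto simp: tape_is_def intro: nth_equalityI)
qed

lemma tape_is_enc_str_unique:
  "tape_is (enc_str xs) tp \<Longrightarrow> tape_is (enc_str ys) tp \<Longrightarrow> xs = ys"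
proof -
  have "0 \<notin> set (enc_str zs)" for zs using set_enc_str by fastforce
  then show "tape_is (enc_str xs) tp \<Longrightarrow> tape_is (enc_str ys) tp \<Longrightarrow> xs = ys"
    using tape_is_unique inj_enc_str by (metis injD)
qed

lemma run_add: "run A M (m + n) c = Option.bind (run A M m c) (run A M n)"
  by (induction n) auto

lemmas run_Suc = run.simps(2)
declare run.simps(2)[simp del]

lemma run_add_Some:
  "run A M m c = Some c1 \<Longrightarrow> run A M n c1 = Some c2 \<Longrightarrow> run A M (m + n) c = Some c2"
  by (simp add: run_add)

lemma run_Suc_step: "run A M (Suc n) c = Option.bind (step A M c) (run A M n)"
  using run_add[of A M "Suc 0" n c] by (simp add: run_Suc)

lemma run_Suc_Some: "step A M c = Some c' \<Longrightarrow> run A M (Suc n) c = run A M n c'"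
  by (simp add: run_Suc_step)

lemma run_1: "step A M c = Some c' \<Longrightarrow> run A M 1 c = Some c'"
  by (simp add: run_Suc_Some)

lemma run_beyond_halt:
  assumes "run A M t c0 = Some c" "step A M c = None" "t < t'"
  shows "run A M t' c0 = None"
proof -
  obtain k where "t' = t + Suc k" using less_imp_Suc_add[OF assms(3)] by auto
  then have "run A M t' c0 = Option.bind (run A M t c0) (run A M (Suc k))"
    by (simp only: run_add)
  then show ?thesis using assms(1,2) by (simp add: run_Suc_step)
qed

lemma halts_with_det:
  assumes "halts_with A M w t c" "halts_with A M w t' c'"
  shows "t = t' \<and> c = c'"
proof -
  have "\<not> t < t'" "\<not> t' < t"
    using assms run_beyond_halt[of A M _ "init_conf w"] by (fastforce simp: halts_with_def)+
  then show ?thesis using assms by (simp add: halts_with_def)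
qed

lemma lresult_halting:
  assumes "halts_with A M (enc_str \<sigma>) t c" "tape_is (enc_str [h]) (snd (snd c))"
  shows "lresult A M \<sigma> = Some (h, t, queries A M (enc_str \<sigma>) t)"
proof -
  have "(THE r. \<exists>h t c. r = (h, t, queries A M (enc_str \<sigma>) t) \<and>
          halts_with A M (enc_str \<sigma>) t c \<and> tape_is (enc_str [h]) (snd (snd c)))
        = (h, t, queries A M (enc_str \<sigma>) t)"
  proof (rule the_equality)
    fix r assume "\<exists>h' t' c'. r = (h', t', queries A M (enc_str \<sigma>) t') \<and>
                   halts_with A M (enc_str \<sigma>) t' c' \<and> tape_is (enc_str [h']) (snd (snd c'))"
    then obtain h' t' c' where r: "r = (h', t', queries A M (enc_str \<sigma>) t')"
      "halts_with A M (enc_str \<sigma>) t' c'" "tape_is (enc_str [h']) (snd (snd c'))" by blast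
    from halts_with_det[OF assms(1) r(2)] r(3) assms(2) have "t = t'" "[h] = [h']"
      using tape_is_enc_str_unique by auto
    then show "r = (h, t, queries A M (enc_str \<sigma>) t)" using r(1) by simp
  qed (use assms in blast)
  moreover have "\<exists>h t c. halts_with A M (enc_str \<sigma>) t c \<and> tape_is (enc_str [h]) (snd (snd c))"
    using assms by blast
  ultimately show ?thesis unfolding lresult_def by simp
qed

lemma lresult_SomeD:
  assumes "lresult A M \<sigma> = Some r"
  obtains h t c where "r = (h, t, queries A M (enc_str \<sigma>) t)"
    "halts_with A M (enc_str \<sigma>) t c" "tape_is (enc_str [h]) (snd (snd c))"
proof -
  from assms obtain h t c where "halts_with A M (enc_str \<sigma>) t c" "tape_is (enc_str [h]) (snd (snd c))"
    unfolding lresult_def by (auto split: if_splits)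
  with lresult_halting[OF this] assms that show ?thesis by simp
qed

lemma length_queries: "length (queries A M w t) \<le> t"
  by (induction t) (auto simp: queries_def split: prod.splits)

lemma lresult_length_queries: "lresult A M \<sigma> = Some (h, t, qs) \<Longrightarrow> length qs \<le> t"
  using length_queries by (metis lresult_SomeD prod.inject)

lemma str_out_eq: "computes_str T w \<tau> \<Longrightarrow> str_out T w = \<tau>"
  unfolding str_out_def computes_str_def
  by (rule the_equality) (use halts_with_det tape_is_enc_str_unique in blast)+

lemma step_move:
  "q \<noteq> qquery M \<Longrightarrow> map_of (delta M) (q, tp h) = Some (q', s, d) \<Longrightarrow>
   step A M (q, h, tp) = Some (q', if d then h + 1 else h - 1, tp(h := s))"
  by (simp add: step_def)

lemma step_right:
  "q \<noteq> qquery M \<Longrightarrow> tp h = a \<Longrightarrow> map_of (delta M) (q, a) = Some (q', s, True) \<Longrightarrow>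
   h' = h + 1 \<Longrightarrow> tp' = tp(h := s) \<Longrightarrow> step A M (q, h, tp) = Some (q', h', tp')"
  by (simp add: step_def)

lemma step_left:
  "q \<noteq> qquery M \<Longrightarrow> tp h = a \<Longrightarrow> map_of (delta M) (q, a) = Some (q', s, False) \<Longrightarrow>
   h' = h - 1 \<Longrightarrow> tp' = tp(h := s) \<Longrightarrow> step A M (q, h, tp) = Some (q', h', tp')"
  by (simp add: step_def)

lemma scan_right:
  assumes "q \<noteq> qquery M" "\<forall>s\<in>S. map_of (delta M) (q, s) = Some (q, g s, True)"
    "\<forall>i<m. tp (p + i) \<in> S"
  shows "run A M m (q, p, tp) = Some (q, p + m, \<lambda>i. if p \<le> i \<and> i < p + m then g (tp i) else tp i)"
  using assms(3)
proof (induction m)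
  case (Suc m)
  have "tp (p + m) \<in> S" using Suc.prems by simp
  then have "step A M (q, p + m, \<lambda>i. if p \<le> i \<and> i < p + m then g (tp i) else tp i)
      = Some (q, p + Suc m, \<lambda>i. if p \<le> i \<and> i < p + Suc m then g (tp i) else tp i)"
    using assms(1,2) by (intro step_right) (auto intro!: ext)
  with Suc show ?case by (simp add: run_Suc)
qed (simp add: fun_eq_iff)

lemma scan_right_keep:
  assumes "q \<noteq> qquery M" "\<forall>s\<in>S. map_of (delta M) (q, s) = Some (q, s, True)"
    "\<forall>i<m. tp (p + i) \<in> S"
  shows "run A M m (q, p, tp) = Some (q, p + m, tp)"
  using scan_right[where g = "\<lambda>s. s"] assms by simp

lemma scan_left:
  assumes "q \<noteq> qquery M" "\<forall>s\<in>S. map_of (delta M) (q, s) = Some (q, s, False)"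
    "\<forall>i. p < i \<and> i \<le> p + m \<longrightarrow> tp i \<in> S"
  shows "run A M m (q, p + m, tp) = Some (q, p, tp)"
  using assms(3)
proof (induction m)
  case (Suc m)
  have "tp (p + Suc m) \<in> S" using Suc.prems by simp
  then have "step A M (q, p + Suc m, tp) = Some (q, p + m, tp)"
    using assms(1,2) by (intro step_left) auto
  with Suc show ?case by (simp add: run_Suc_Some)
qed simp

lemma scan_alternating:
  assumes "a \<noteq> qquery M" "b \<noteq> qquery M"
    "\<forall>s\<in>S. map_of (delta M) (a, s) = Some (b, s, True)"
    "\<forall>s\<in>S. map_of (delta M) (b, s) = Some (a, s, True)"
    "\<forall>i<m. tp (p + i) \<in> S"
  shows "run A M m (a, p, tp) = Some (if even m then a else b, p + m, tp)"
  using assms(5)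
proof (induction m)
  case (Suc m)
  have "tp (p + m) \<in> S" using Suc.prems by simp
  then have "step A M (if even m then a else b, p + m, tp)
      = Some (if even (Suc m) then a else b, p + Suc m, tp)"
    using assms(1-4) by (intro step_right) auto
  with Suc show ?case by (simp add: run_Suc)
qed simp

lemma map_of_row:
  "map_of (map (\<lambda>s. ((a, s), f s)) xs) (b, s0) = (if a = b \<and> s0 \<in> set xs then Some (f s0) else None)"
  by (induction xs) auto

section \<open>Learners that ignore the oracle\<close>

text \<open>Without oracle every query of M is answered with `no'. The machine blind M reproduces
  this under every oracle: its own query state is fresh and unreachable, and the old query state
  becomes a detour of one step right and one step back left into the `no' state.\<close>

definition used_states :: "tm \<Rightarrow> nat set" where
  "used_states M = {0, qquery M, qyes M, qno M} \<union> (\<lambda>((q, s), (q', s', d)). q) ` set (delta M)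
                   \<union> (\<lambda>((q, s), (q', s', d)). q') ` set (delta M)"

definition used_symbols :: "tm \<Rightarrow> nat set" where
  "used_symbols M = {0, 1, 2, 3} \<union> (\<lambda>((q, s), (q', s', d)). s') ` set (delta M)"

definition fresh_state :: "tm \<Rightarrow> nat" where
  "fresh_state M = Suc (Max (used_states M))"

definition symbol_bound :: "tm \<Rightarrow> nat" where
  "symbol_bound M = Suc (Max (used_symbols M))"

definition blind :: "tm \<Rightarrow> tm" where
  "blind M = \<lparr>delta = map (\<lambda>s. ((qquery M, s), (fresh_state M, s, True))) [0..<symbol_bound M]
                    @ map (\<lambda>s. ((fresh_state M, s), (qno M, s, False))) [0..<symbol_bound M]
                    @ delta M,
              qquery = Suc (fresh_state M), qyes = qyes M, qno = qno M\<rparr>"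

definition blind_inv :: "tm \<Rightarrow> config \<Rightarrow> bool" where
  "blind_inv M c = (case c of (q, h, tp) \<Rightarrow> q \<in> used_states M \<and> (\<forall>i. tp i < symbol_bound M))"

lemma used_state_less: "q \<in> used_states M \<Longrightarrow> q < fresh_state M"
proof -
  have "finite (used_states M)" by (simp add: used_states_def)
  then show "q \<in> used_states M \<Longrightarrow> q < fresh_state M"
    unfolding fresh_state_def by (meson Max_ge le_imp_less_Suc)
qed

lemma used_symbol_less: "s \<in> used_symbols M \<Longrightarrow> s < symbol_bound M"
proof -
  have "finite (used_symbols M)" by (simp add: used_symbols_def)
  then show "s \<in> used_symbols M \<Longrightarrow> s < symbol_bound M"
    unfolding symbol_bound_def by (meson Max_ge le_imp_less_Suc)
qed

lemma transition_used:
  assumes "map_of (delta M) k = Some (q', s', d)"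
  shows "q' \<in> used_states M" "s' \<in> used_symbols M"
proof -
  from assms have "(k, (q', s', d)) \<in> set (delta M)" by (rule map_of_SomeD)
  then show "q' \<in> used_states M" "s' \<in> used_symbols M"
    unfolding used_states_def used_symbols_def by force+
qed

lemma blind_fields[simp]:
  "qquery (blind M) = Suc (fresh_state M)" "qno (blind M) = qno M"
  by (simp_all add: blind_def)

lemma map_of_blind:
  "map_of (delta (blind M)) (q, s) =
     (if q = qquery M \<and> s < symbol_bound M then Some (fresh_state M, s, True)
      else if q = fresh_state M \<and> s < symbol_bound M then Some (qno M, s, False)
      else map_of (delta M) (q, s))"
proof -
  have "qquery M \<noteq> fresh_state M"
    using used_state_less[of "qquery M" M] by (auto simp: used_states_def)
  then show ?thesis by (simp add: blind_def map_add_def map_of_row split: option.splits)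
qed

lemma blind_step_halt:
  assumes "blind_inv M c" "step {} M c = None"
  shows "step A (blind M) c = None"
proof -
  obtain q h tp where c: "c = (q, h, tp)" by (cases c)
  with assms have "q < fresh_state M" "q \<noteq> qquery M" "map_of (delta M) (q, tp h) = None"
    by (auto simp: blind_inv_def step_def used_state_less split: if_splits option.splits)
  then show ?thesis by (simp add: c step_def map_of_blind)
qed

lemma blind_step:
  assumes "blind_inv M c" "step {} M c = Some c'"
  shows "blind_inv M c' \<and> (run A (blind M) 1 c = Some c' \<or> run A (blind M) 2 c = Some c')"
proof -
  obtain q h tp where c: "c = (q, h, tp)" by (cases c)
  from assms c have q: "q < fresh_state M" and tp: "\<forall>i. tp i < symbol_bound M"
    by (auto simp: blind_inv_def used_state_less)
  show ?thesis
  proof (cases "q = qquery M")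
    case True
    then have c': "c' = (qno M, h, tp)" using assms(2) c by (simp add: step_def)
    have "qquery M \<noteq> fresh_state M"
      using used_state_less[of "qquery M" M] by (auto simp: used_states_def)
    then have "map_of (delta (blind M)) (q, tp h) = Some (fresh_state M, tp h, True)"
      and "map_of (delta (blind M)) (fresh_state M, tp (h + 1)) = Some (qno M, tp (h + 1), False)"
      using True tp by (simp_all add: map_of_blind)
    then have "step A (blind M) (q, h, tp) = Some (fresh_state M, h + 1, tp)"
      and "step A (blind M) (fresh_state M, h + 1, tp) = Some (qno M, h, tp)"
      using q by (auto simp: step_def)
    then have "run A (blind M) 2 c = Some c'"
      by (simp add: c c' numeral_2_eq_2 run_Suc_Some)
    moreover have "blind_inv M c'" using c' tp by (simp add: blind_inv_def used_states_def)
    ultimately show ?thesis by simp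
  next
    case False
    then obtain q' s d where tr: "map_of (delta M) (q, tp h) = Some (q', s, d)"
      and c': "c' = (q', if d then h + 1 else h - 1, tp(h := s))"
      using assms(2) c by (auto simp: step_def split: option.splits)
    have "step A (blind M) c = Some c'"
      using c c' q False tr by (simp add: step_move map_of_blind)
    moreover have "blind_inv M c'"
      using c' tp transition_used[OF tr] used_symbol_less by (simp add: blind_inv_def)
    ultimately show ?thesis using run_1 by blast
  qed
qed

lemma blind_run:
  assumes "blind_inv M c0" "run {} M n c0 = Some c"
  shows "\<exists>n'\<le>2 * n. run A (blind M) n' c0 = Some c \<and> blind_inv M c"
  using assms(2)
proof (induction n arbitrary: c)
  case 0
  then show ?case using assms(1) by simp
next
  case (Suc n)
  then obtain c1 where r1: "run {} M n c0 = Some c1" and s1: "step {} M c1 = Some c"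
    by (cases "run {} M n c0") (auto simp: run_Suc)
  from Suc.IH[OF r1] obtain n1 where n1: "n1 \<le> 2 * n" "run A (blind M) n1 c0 = Some c1" "blind_inv M c1"
    by blast
  from blind_step[OF n1(3) s1, of A] have inv: "blind_inv M c"
    and "run A (blind M) 1 c1 = Some c \<or> run A (blind M) 2 c1 = Some c" by auto
  then have "\<exists>k\<le>2. run A (blind M) k c1 = Some c" by (metis le_refl one_le_numeral)
  then obtain k where k: "k \<le> 2" "run A (blind M) k c1 = Some c" by blast
  have "run A (blind M) (n1 + k) c0 = Some c" using n1(2) k(2) by (rule run_add_Some)
  moreover have "n1 + k \<le> 2 * Suc n" using n1(1) k(1) by simp
  ultimately show ?case using inv by blast
qed

lemma blind_inv_init: "blind_inv M (init_conf (enc_str \<sigma>))"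
proof -
  have "tape_of (enc_str \<sigma>) i \<in> used_symbols M" for i
    using tape_of_enc_str_less[of \<sigma> i] by (auto simp: used_symbols_def)
  then have "\<forall>i. tape_of (enc_str \<sigma>) i < symbol_bound M" by (blast intro: used_symbol_less)
  moreover have "0 \<in> used_states M" by (simp add: used_states_def)
  ultimately show ?thesis by (simp add: blind_inv_def init_conf_tape_of)
qed

lemma lresult_blind:
  assumes "lresult {} M \<sigma> = Some (h, t, qs)"
  obtains t' qs' where "t' \<le> 2 * t" "lresult A (blind M) \<sigma> = Some (h, t', qs')"
proof -
  from assms obtain c where halt: "halts_with {} M (enc_str \<sigma>) t c"
    and out: "tape_is (enc_str [h]) (snd (snd c))" by (auto elim: lresult_SomeD)
  then obtain t' where t': "t' \<le> 2 * t" "run A (blind M) t' (init_conf (enc_str \<sigma>)) = Some c"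
    "blind_inv M c"
    using blind_run[OF blind_inv_init] unfolding halts_with_def by blast
  have "step A (blind M) c = None"
    using blind_step_halt[OF t'(3)] halt by (simp add: halts_with_def)
  with t'(2) have "halts_with A (blind M) (enc_str \<sigma>) t' c" by (simp add: halts_with_def)
  from lresult_halting[OF this out] t'(1) show thesis by (rule that[rotated])
qed

section \<open>Teachers that ignore the oracle log\<close>

text \<open>The machine skip_log T turns its input teach_in \<sigma> L back into enc_str \<sigma> and then runs
  T with all states shifted by 5. The prelude marks the first cell, erases the separator and the
  log, walks back to the mark and restores the first cell.\<close>

definition skip_log_prelude :: "((nat \<times> nat) \<times> (nat \<times> nat \<times> bool)) list" where
  "skip_log_prelude =
     [((0,4),(2,5,True)), ((0,1),(1,6,True)), ((0,2),(1,7,True)), ((0,3),(1,8,True)),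
      ((1,1),(1,1,True)), ((1,2),(1,2,True)), ((1,3),(1,3,True)), ((1,4),(2,0,True)),
      ((2,1),(2,0,True)), ((2,2),(2,0,True)), ((2,3),(2,0,True)), ((2,0),(3,0,False)),
      ((3,0),(3,0,False)), ((3,1),(3,1,False)), ((3,2),(3,2,False)), ((3,3),(3,3,False)),
      ((3,5),(4,0,True)), ((3,6),(4,1,True)), ((3,7),(4,2,True)), ((3,8),(4,3,True)),
      ((4,0),(5,0,False)), ((4,1),(5,1,False)), ((4,2),(5,2,False)), ((4,3),(5,3,False))]"

definition shift_transition ::
  "(nat \<times> nat) \<times> (nat \<times> nat \<times> bool) \<Rightarrow> (nat \<times> nat) \<times> (nat \<times> nat \<times> bool)" where
  "shift_transition e = (case e of ((q, s), (q', s', d)) \<Rightarrow> ((q + 5, s), (q' + 5, s', d)))"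

definition skip_log :: "tm \<Rightarrow> tm" where
  "skip_log T = \<lparr>delta = skip_log_prelude @ map shift_transition (delta T),
                 qquery = qquery T + 5, qyes = qyes T + 5, qno = qno T + 5\<rparr>"

definition shift_conf :: "config \<Rightarrow> config" where
  "shift_conf c = (case c of (q, h, tp) \<Rightarrow> (q + 5, h, tp))"

lemma skip_log_fields[simp]:
  "qquery (skip_log T) = qquery T + 5" "qyes (skip_log T) = qyes T + 5" "qno (skip_log T) = qno T + 5"
  by (simp_all add: skip_log_def)

lemma map_of_skip_log_prelude:
  "q < 5 \<Longrightarrow> map_of (delta (skip_log T)) (q, s) = map_of skip_log_prelude (q, s)"
proof -
  have "q < 5 \<Longrightarrow> map_of (map shift_transition ds) (q, s) = None" for ds
    by (induction ds) (auto simp: shift_transition_def split: prod.splits)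
  then show "q < 5 \<Longrightarrow> ?thesis" by (simp add: skip_log_def map_add_def split: option.splits)
qed

lemma map_of_skip_log_shifted:
  "map_of (delta (skip_log T)) (q + 5, s) =
     map_option (\<lambda>(q', s', d). (q' + 5, s', d)) (map_of (delta T) (q, s))"
proof -
  have "map_of (map shift_transition ds) (q + 5, s) =
          map_option (\<lambda>(q', s', d). (q' + 5, s', d)) (map_of ds (q, s))" for ds
    by (induction ds) (auto simp: shift_transition_def split: prod.splits)
  moreover have "map_of skip_log_prelude (q + 5, s) = None"
    by (simp add: skip_log_prelude_def)
  ultimately show ?thesis by (simp add: skip_log_def map_add_def split: option.splits)
qed

lemma skip_log_step_shift: "step A (skip_log T) (shift_conf c) = map_option shift_conf (step A T c)"
proof -
  obtain q h tp where "c = (q, h, tp)" by (cases c)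
  then show ?thesis using map_of_skip_log_shifted[of T q "tp h"]
    by (auto simp: shift_conf_def step_def split: option.splits)
qed

lemma skip_log_run_shift: "run A (skip_log T) n (shift_conf c) = map_option shift_conf (run A T n c)"
proof (induction n)
  case (Suc n)
  then show ?case by (cases "run A T n c") (simp_all add: run_Suc skip_log_step_shift)
qed simp

lemma skip_log_prelude_step:
  assumes "q < 5" "map_of skip_log_prelude (q, tp h) = Some (q', s, d)"
  shows "step A (skip_log T) (q, h, tp) = Some (q', if d then h + 1 else h - 1, tp(h := s))"
  using assms by (intro step_move) (simp_all add: map_of_skip_log_prelude)

definition first_cell_mark :: "nat \<Rightarrow> nat" where
  "first_cell_mark s = (if s = 4 then 5 else s + 5)"

lemma skip_log_mark:
  assumes "\<forall>i<n. tp i \<in> {1, 2, 3}" "tp n = 4"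
  shows "\<exists>a. run A (skip_log T) a (0, 0, tp) = Some (2, Suc n, (tp(n := 0))(0 := first_cell_mark (tp 0)))"
proof (cases "n = 0")
  case True
  then have "step A (skip_log T) (0, 0, tp) = Some (2, Suc n, (tp(n := 0))(0 := first_cell_mark (tp 0)))"
    using assms(2) skip_log_prelude_step[of 0 tp 0 2 5 True A T]
    by (simp add: skip_log_prelude_def first_cell_mark_def)
  then show ?thesis by (blast intro: run_1)
next
  case False
  have first: "tp 0 \<in> {1, 2, 3}" using assms(1) False by simp
  define tp1 where "tp1 = tp(0 := tp 0 + 5)"
  have "step A (skip_log T) (0, 0, tp) = Some (1, 1, tp1)"
    using first skip_log_prelude_step[of 0 tp 0 1 "tp 0 + 5" True A T]
    by (auto simp: skip_log_prelude_def tp1_def)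
  moreover have "run A (skip_log T) (n - 1) (1, 1, tp1) = Some (1, n, tp1)"
    using assms(1) False scan_right_keep[where S = "{1, 2, 3}" and p = 1 and m = "n - 1"]
    by (simp add: map_of_skip_log_prelude skip_log_prelude_def tp1_def)
  moreover have "step A (skip_log T) (1, n, tp1) = Some (2, Suc n, tp1(n := 0))"
    using assms(2) False skip_log_prelude_step[of 1 tp1 n 2 0 True A T]
    by (simp add: skip_log_prelude_def tp1_def)
  ultimately have "run A (skip_log T) (1 + (n - 1) + 1) (0, 0, tp) = Some (2, Suc n, tp1(n := 0))"
    by (blast intro: run_add_Some run_1)
  moreover have "tp1(n := 0) = (tp(n := 0))(0 := first_cell_mark (tp 0))"
    using False first by (auto simp: tp1_def first_cell_mark_def)
  ultimately show ?thesis by auto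
qed

lemma skip_log_erase:
  assumes "\<forall>j<l. tp (p + j) \<in> {1, 2, 3}" "tp (p + l) = 0"
  shows "run A (skip_log T) (l + 1) (2, p, tp)
           = Some (3, p + l - 1, \<lambda>i. if p \<le> i \<and> i < p + l then 0 else tp i)"
proof -
  define tp' where "tp' = (\<lambda>i. if p \<le> i \<and> i < p + l then 0 else tp i)"
  have "run A (skip_log T) l (2, p, tp)
          = Some (2, p + l, \<lambda>i. if p \<le> i \<and> i < p + l then (\<lambda>_. 0) (tp i) else tp i)"
  proof (rule scan_right[where S = "{1, 2, 3}"])
    show "\<forall>s\<in>{1, 2, 3}. map_of (delta (skip_log T)) (2, s) = Some (2, (\<lambda>_. 0) s, True)"
      by (simp add: map_of_skip_log_prelude skip_log_prelude_def)
  qed (use assms(1) in simp_all)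
  then have "run A (skip_log T) l (2, p, tp) = Some (2, p + l, tp')" by (simp add: tp'_def)
  moreover have blank: "tp' (p + l) = 0" using assms(2) by (simp add: tp'_def)
  then have tr: "map_of skip_log_prelude (2, tp' (p + l)) = Some (3, 0, False)"
    by (simp add: skip_log_prelude_def)
  have "step A (skip_log T) (2, p + l, tp') = Some (3, p + l - 1, tp'(p + l := 0))"
    using skip_log_prelude_step[of 2 tp' "p + l" 3 0 False A T, OF _ tr] by simp
  then have "step A (skip_log T) (2, p + l, tp') = Some (3, p + l - 1, tp')"
    using blank by (simp add: fun_upd_idem)
  ultimately show ?thesis unfolding tp'_def by (rule run_add_Some[OF _ run_1])
qed

lemma skip_log_return:
  assumes "\<forall>i. 0 < i \<and> i \<le> m \<longrightarrow> tp i \<in> {0, 1, 2, 3}"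
  shows "run A (skip_log T) m (3, m, tp) = Some (3, 0, tp)"
proof -
  have "\<forall>s\<in>{0, 1, 2, 3}. map_of (delta (skip_log T)) (3, s) = Some (3, s, False)"
    by (simp add: map_of_skip_log_prelude skip_log_prelude_def)
  with assms show ?thesis
    using scan_left[where q = 3 and M = "skip_log T" and S = "{0, 1, 2, 3}" and p = 0] by simp
qed

lemma skip_log_unmark:
  assumes "tp 0 \<in> {5, 6, 7, 8}" "tp 1 \<in> {0, 1, 2, 3}"
  shows "run A (skip_log T) 2 (3, 0, tp) = Some (5, 0, tp(0 := tp 0 - 5))"
proof -
  have "map_of skip_log_prelude (3, tp 0) = Some (4, tp 0 - 5, True)"
    using assms(1) by (auto simp: skip_log_prelude_def)
  then have "step A (skip_log T) (3, 0, tp) = Some (4, 1, tp(0 := tp 0 - 5))"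
    using skip_log_prelude_step[of 3 tp 0] by simp
  moreover have "map_of skip_log_prelude (4, tp 1) = Some (5, tp 1, False)"
    using assms(2) by (auto simp: skip_log_prelude_def)
  then have "step A (skip_log T) (4, 1, tp(0 := tp 0 - 5)) = Some (5, 0, tp(0 := tp 0 - 5))"
    using skip_log_prelude_step[of 4 "tp(0 := tp 0 - 5)" 1 5 "tp 1" False A T]
    by (simp add: fun_upd_idem)
  ultimately show ?thesis by (simp add: numeral_2_eq_2 run_Suc_Some)
qed

lemma skip_log_prelude_run:
  "\<exists>t. run A (skip_log T) t (init_conf (teach_in \<sigma> L)) = Some (shift_conf (init_conf (enc_str \<sigma>)))"
proof -
  define e where "e = enc_str \<sigma>"
  define n where "n = length e"
  define l where "l = length (enc_str L)"
  define tp0 where "tp0 = tape_of (e @ 4 # enc_str L)"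
  have init: "init_conf (teach_in \<sigma> L) = (0, 0, tp0)"
    by (simp add: teach_in_def init_conf_tape_of tp0_def e_def)
  have data: "\<forall>i<n. tp0 i \<in> {1, 2, 3}" "tp0 n = 4"
    using enc_str_nth[of _ \<sigma>] by (auto simp: tp0_def tape_of_def nth_append n_def e_def)
  have log: "\<forall>j<l. tp0 (Suc n + j) \<in> {1, 2, 3}" "tp0 (Suc n + l) = 0"
    using enc_str_nth[of _ L] by (auto simp: tp0_def tape_of_def nth_append n_def l_def)
  define tpA where "tpA = (tp0(n := 0))(0 := first_cell_mark (tp0 0))"
  define tpB where "tpB = (\<lambda>i. if Suc n \<le> i \<and> i < Suc n + l then 0 else tpA i)"
  have tpB_pos: "tpB i = tape_of e i" if "0 < i" for i
    using that by (auto simp: tpB_def tpA_def tp0_def tape_of_def nth_append n_def l_def)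
  have tpB_0: "tpB 0 = tape_of e 0 + 5"
    using data(1) by (cases "n = 0")
      (auto simp: tpB_def tpA_def tp0_def tape_of_def nth_append n_def first_cell_mark_def)
  obtain a where "run A (skip_log T) a (0, 0, tp0) = Some (2, Suc n, tpA)"
    using skip_log_mark[OF data] unfolding tpA_def by blast
  moreover have "run A (skip_log T) (l + 1) (2, Suc n, tpA) = Some (3, n + l, tpB)"
    using skip_log_erase[of l tpA "Suc n"] log by (simp add: tpA_def tpB_def)
  moreover have "run A (skip_log T) (n + l) (3, n + l, tpB) = Some (3, 0, tpB)"
    using tape_of_enc_str_less[of \<sigma>] tpB_pos
    by (intro skip_log_return) (auto simp: e_def less_Suc_eq numeral_eq_Suc)
  moreover have "run A (skip_log T) 2 (3, 0, tpB) = Some (5, 0, tpB(0 := tpB 0 - 5))"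
    using tape_of_enc_str_less[of \<sigma>] tpB_pos[of 1] tpB_0
    by (intro skip_log_unmark) (auto simp: e_def less_Suc_eq numeral_eq_Suc)
  moreover have "tpB(0 := tpB 0 - 5) = tape_of e"
    using tpB_pos tpB_0 by (auto simp: fun_eq_iff)
  ultimately have "run A (skip_log T) (a + (l + 1) + (n + l) + 2) (0, 0, tp0) = Some (5, 0, tape_of e)"
    by (metis run_add_Some)
  then show ?thesis unfolding init by (auto simp: shift_conf_def init_conf_tape_of e_def)
qed

lemma skip_log_computes:
  assumes "computes_str T (enc_str \<sigma>) \<tau>"
  shows "computes_str (skip_log T) (teach_in \<sigma> L) \<tau>"
proof -
  from assms obtain t c where halt: "halts_with {} T (enc_str \<sigma>) t c"
    and out: "tape_is (enc_str \<tau>) (snd (snd c))"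
    unfolding computes_str_def by blast
  obtain t0 where "run {} (skip_log T) t0 (init_conf (teach_in \<sigma> L))
                     = Some (shift_conf (init_conf (enc_str \<sigma>)))"
    using skip_log_prelude_run by blast
  moreover have "run {} (skip_log T) t (shift_conf (init_conf (enc_str \<sigma>))) = Some (shift_conf c)"
    using halt by (simp add: skip_log_run_shift halts_with_def)
  ultimately have "halts_with {} (skip_log T) (teach_in \<sigma> L) (t0 + t) (shift_conf c)"
    using halt by (simp add: halts_with_def run_add_Some skip_log_step_shift)
  moreover have "snd (snd (shift_conf c)) = snd (snd c)" by (simp add: shift_conf_def split: prod.splits)
  ultimately show ?thesis using out unfolding computes_str_def by metis
qed

lemma str_out_skip_log:
  "teacher T \<Longrightarrow> str_out (skip_log T) (teach_in \<sigma> L) = str_out T (enc_str \<sigma>)"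
  unfolding teacher_def by (metis skip_log_computes str_out_eq)

lemma teacherO_skip_log: "teacher T \<Longrightarrow> teacherO (skip_log T)"
  unfolding teacherO_def using str_out_skip_log
  by (simp add: teacher_def) (metis skip_log_computes)

definition identity_teacher :: tm where
  "identity_teacher = \<lparr>delta = [], qquery = 1, qyes = 2, qno = 3\<rparr>"

lemma identity_teacher_computes: "computes_str identity_teacher (enc_str \<sigma>) \<sigma>"
proof -
  have "halts_with {} identity_teacher (enc_str \<sigma>) 0 (init_conf (enc_str \<sigma>))"
    by (simp add: halts_with_def init_conf_def step_def identity_teacher_def)
  then show ?thesis
    unfolding computes_str_def using tape_is_tape_of by (fastforce simp: init_conf_tape_of)
qed

lemma str_out_identity_teacher: "str_out identity_teacher (enc_str \<sigma>) = \<sigma>"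
  by (rule str_out_eq[OF identity_teacher_computes])

lemma teacher_identity_teacher: "teacher identity_teacher"
  unfolding teacher_def str_out_identity_teacher using identity_teacher_computes by blast

lemma prt_conv_defined: "prt_conv F A p res \<Longrightarrow> res n \<noteq> None"
  unfolding prt_conv_def by (metis nle_le)

text \<open>The query count is bounded by the step count, which allows the doubled step bound to absorb
  the query bound.\<close>

lemma prt_conv_slowdown:
  assumes conv: "prt_conv F A p res"
    and slower: "\<And>n h t qs. res n = Some (h, t, qs) \<Longrightarrow>
                   \<exists>t' qs'. t' \<le> 2 * t \<and> length qs' \<le> t' \<and> res' n = Some (h, t', qs')"
  shows "prt_conv F A (smult 2 p) res'"
proof -
  from conv obtain i where i: "\<forall>j\<ge>i. fst (the (res j)) = fst (the (res i))"
    "F (fst (the (res i))) = A" "(\<Sum>j\<le>i. fst (snd (the (res j)))) < poly p (mi F A)"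
    unfolding prt_conv_def by blast
  have key: "res' j \<noteq> None \<and> fst (the (res' j)) = fst (the (res j)) \<and>
      fst (snd (the (res' j))) \<le> 2 * fst (snd (the (res j))) \<and>
      length (snd (snd (the (res' j)))) \<le> fst (snd (the (res' j)))" for j
    using prt_conv_defined[OF conv, of j] slower by fastforce
  have "(\<Sum>j\<le>i. fst (snd (the (res' j)))) \<le> (\<Sum>j\<le>i. 2 * fst (snd (the (res j))))"
    using key by (intro sum_mono) blast
  also have "\<dots> = 2 * (\<Sum>j\<le>i. fst (snd (the (res j))))" by (simp add: sum_distrib_left)
  finally have steps: "(\<Sum>j\<le>i. fst (snd (the (res' j)))) < poly (smult 2 p) (mi F A)"
    using i(3) by simp
  have "(\<Sum>j\<le>i. length (snd (snd (the (res' j))))) \<le> (\<Sum>j\<le>i. fst (snd (the (res' j))))"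
    using key by (intro sum_mono) blast
  with steps have queries: "(\<Sum>j\<le>i. length (snd (snd (the (res' j))))) \<le> poly (smult 2 p) (mi F A)"
    by linarith
  show ?thesis unfolding prt_conv_def
  proof (intro exI[of _ i] conjI)
    show "\<forall>j\<ge>i. res' j \<noteq> None \<and> fst (the (res' j)) = fst (the (res' i))"
      using key i(1) by metis
    show "F (fst (the (res' i))) = A" using key i(2) by metis
  qed (use key steps queries in auto)
qed

lemma prt_conv_blind:
  assumes "prt_conv F A p (\<lambda>n. lresult {} M (g n))"
  shows "prt_conv F A (smult 2 p) (\<lambda>n. lresult A (blind M) (g n))"
  using assms
proof (rule prt_conv_slowdown)
  fix n h t qs assume "lresult {} M (g n) = Some (h, t, qs)"
  then obtain t' qs' where "t' \<le> 2 * t" "lresult A (blind M) (g n) = Some (h, t', qs')"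
    by (rule lresult_blind)
  then show "\<exists>t' qs'. t' \<le> 2 * t \<and> length qs' \<le> t' \<and> lresult A (blind M) (g n) = Some (h, t', qs')"
    using lresult_length_queries by blast
qed

lemma to_res_skip_log:
  assumes "teacher T" "\<And>n. lresult A M (str_out T (enc_str (prefix_of f n))) \<noteq> None"
  shows "to_res M (skip_log T) A f = (\<lambda>n. lresult A M (str_out T (enc_str (prefix_of f n))))"
proof -
  have log: "tolog M (skip_log T) A f n \<noteq> None" for n
  proof (induction n)
    case (Suc n)
    then show ?case using assms(2)[of n] str_out_skip_log[OF assms(1)] by auto
  qed simp
  show ?thesis
  proof
    fix n
    obtain L where "tolog M (skip_log T) A f n = Some L" using log by blast
    then show "to_res M (skip_log T) A f n = lresult A M (str_out T (enc_str (prefix_of f n)))"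
      by (simp add: to_res_def str_out_skip_log[OF assms(1)])
  qed
qed

lemma PRT_subset_PRT_O: "PRT \<subseteq> PRT_O"
proof
  fix F assume "F \<in> PRT"
  then obtain M p where "indexed_family F"
    and "\<forall>A\<in>range F. \<forall>f. is_enum f A \<longrightarrow> prt_conv F A p (\<lambda>n. lresult {} M (prefix_of f n))"
    unfolding PRT_def by blast
  then show "F \<in> PRT_O" unfolding PRT_O_def by (blast intro: prt_conv_blind)
qed

lemma PRT_subset_PRT_T: "PRT \<subseteq> PRT_T"
proof
  fix F assume "F \<in> PRT"
  then obtain M p where "indexed_family F"
    and "\<forall>A\<in>range F. \<forall>f. is_enum f A \<longrightarrow> prt_conv F A p (\<lambda>n. lresult {} M (prefix_of f n))"
    unfolding PRT_def by blast
  then show "F \<in> PRT_T" unfolding PRT_T_def using teacher_identity_teacher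
    by (intro CollectI conjI exI[of _ M] exI[of _ identity_teacher] exI[of _ p])
      (simp_all add: str_out_identity_teacher)
qed

lemma PRT_O_subset_PRT_TO: "PRT_O \<subseteq> PRT_TO"
proof
  fix F assume "F \<in> PRT_O"
  then obtain M p where F: "indexed_family F"
    and conv: "\<forall>A\<in>range F. \<forall>f. is_enum f A \<longrightarrow> prt_conv F A p (\<lambda>n. lresult A M (prefix_of f n))"
    unfolding PRT_O_def by blast
  have "prt_conv F A p (to_res M (skip_log identity_teacher) A f)" if "A \<in> range F" "is_enum f A" for A f
  proof -
    have c: "prt_conv F A p (\<lambda>n. lresult A M (prefix_of f n))" using conv that by blast
    then have "\<And>n. lresult A M (str_out identity_teacher (enc_str (prefix_of f n))) \<noteq> None"
      using prt_conv_defined by (simp only: str_out_identity_teacher)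
    then have "to_res M (skip_log identity_teacher) A f
        = (\<lambda>n. lresult A M (str_out identity_teacher (enc_str (prefix_of f n))))"
      by (rule to_res_skip_log[OF teacher_identity_teacher])
    with c show ?thesis by (simp add: str_out_identity_teacher)
  qed
  with F show "F \<in> PRT_TO"
    unfolding PRT_TO_def using teacherO_skip_log[OF teacher_identity_teacher] by blast
qed

lemma PRT_T_subset_PRT_TO: "PRT_T \<subseteq> PRT_TO"
proof
  fix F assume "F \<in> PRT_T"
  then obtain M T p where F: "indexed_family F" and T: "teacher T"
    and conv: "\<forall>A\<in>range F. \<forall>f. is_enum f A \<longrightarrow>
                 prt_conv F A p (\<lambda>n. lresult {} M (str_out T (enc_str (prefix_of f n))))"
    unfolding PRT_T_def by blast
  have "prt_conv F A (smult 2 p) (to_res (blind M) (skip_log T) A f)"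
    if "A \<in> range F" "is_enum f A" for A f
  proof -
    have "prt_conv F A p (\<lambda>n. lresult {} M (str_out T (enc_str (prefix_of f n))))"
      using conv that by blast
    then have c: "prt_conv F A (smult 2 p) (\<lambda>n. lresult A (blind M) (str_out T (enc_str (prefix_of f n))))"
      by (rule prt_conv_blind)
    then have "to_res (blind M) (skip_log T) A f
        = (\<lambda>n. lresult A (blind M) (str_out T (enc_str (prefix_of f n))))"
      using to_res_skip_log[OF T] prt_conv_defined by blast
    with c show ?thesis by simp
  qed
  with F show "F \<in> PRT_TO"
    unfolding PRT_TO_def using teacherO_skip_log[OF T] by blast
qed

section \<open>A family separating the classes\<close>

definition even_bitlen :: "nat set" where
  "even_bitlen = {x. even (length (bits x))}"

definition odd_bitlen :: "nat set" where
  "odd_bitlen = {x. odd (length (bits x))}"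

definition bitlen_family :: "nat \<Rightarrow> nat set" where
  "bitlen_family n = (if even n then even_bitlen else odd_bitlen)"

lemma zero_in_even_bitlen: "0 \<in> even_bitlen"
  by (simp add: even_bitlen_def)

lemma one_in_odd_bitlen: "1 \<in> odd_bitlen"
  by (simp add: odd_bitlen_def bits_nonzero)

lemma even_bitlen_ne_odd_bitlen: "even_bitlen \<noteq> odd_bitlen"
proof -
  have "0 \<notin> odd_bitlen" by (simp add: odd_bitlen_def)
  then show ?thesis using zero_in_even_bitlen by blast
qed

lemma range_bitlen_family: "range bitlen_family = {even_bitlen, odd_bitlen}"
proof
  show "range bitlen_family \<subseteq> {even_bitlen, odd_bitlen}" by (auto simp: bitlen_family_def)
  have "bitlen_family 0 = even_bitlen" "bitlen_family 1 = odd_bitlen"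
    by (simp_all add: bitlen_family_def)
  then show "{even_bitlen, odd_bitlen} \<subseteq> range bitlen_family" by (metis empty_subsetI insert_subset rangeI)
qed

lemma bitlen_family_eq_even_bitlen: "bitlen_family h = even_bitlen \<longleftrightarrow> even h"
  using even_bitlen_ne_odd_bitlen by (simp add: bitlen_family_def)

lemma bitlen_family_eq_odd_bitlen: "bitlen_family h = odd_bitlen \<longleftrightarrow> odd h"
  using even_bitlen_ne_odd_bitlen by (simp add: bitlen_family_def)

lemma mi_even_bitlen: "mi bitlen_family even_bitlen = 0"
  by (simp add: mi_def bitlen_family_def)

lemma mi_odd_bitlen: "mi bitlen_family odd_bitlen = 1"
  unfolding mi_def
proof (rule Least_equality)
  show "bitlen_family 1 = odd_bitlen" by (simp add: bitlen_family_def)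
  show "bitlen_family y = odd_bitlen \<Longrightarrow> 1 \<le> y" for y
    using bitlen_family_eq_odd_bitlen[of y] by (cases y) auto
qed

text \<open>On input enc_str [n, x] the machine parity_checker remembers the parity of n in its state
  (3 or 5), toggles it with every bit of x (4 or 6) and halts on the terminating 3 exactly in
  states 3 and 6; otherwise it runs right forever over the blank tape (state 7).\<close>

definition parity_checker :: tm where
  "parity_checker =
     \<lparr>delta = [((0,3),(3,3,True)), ((0,1),(1,1,True)), ((0,2),(2,2,True)),
               ((1,1),(1,1,True)), ((1,2),(1,2,True)), ((1,3),(3,3,True)),
               ((2,1),(2,1,True)), ((2,2),(2,2,True)), ((2,3),(5,3,True)),
               ((3,1),(4,1,True)), ((3,2),(4,2,True)), ((4,1),(3,1,True)), ((4,2),(3,2,True)),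
               ((4,3),(7,3,True)),
               ((5,1),(6,1,True)), ((5,2),(6,2,True)), ((6,1),(5,1,True)), ((6,2),(5,2,True)),
               ((5,3),(7,3,True)),
               ((7,0),(7,0,True))],
      qquery = 8, qyes = 9, qno = 10\<rparr>"

definition parity_state :: "nat \<Rightarrow> nat \<Rightarrow> nat" where
  "parity_state n x = (if even n then 3 else 5) + (if even (length (bits x)) then 0 else 1)"

lemma parity_checker_step:
  "q \<noteq> 8 \<Longrightarrow> map_of (delta parity_checker) (q, tp h) = Some (q', tp h, True) \<Longrightarrow> h' = Suc h \<Longrightarrow>
   step A parity_checker (q, h, tp) = Some (q', h', tp)"
  by (simp add: step_def parity_checker_def)

lemma parity_checker_read_index:
  "\<exists>t. run A parity_checker t (init_conf (enc_str [n, x]))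
        = Some (if even n then 3 else 5, Suc (length (bits n)), tape_of (enc_str [n, x]))"
proof -
  define tp where "tp = tape_of (enc_str [n, x])"
  define s where "s = (if even n then 1 else 2 :: nat)"
  define q where "q = (if even n then 3 else 5 :: nat)"
  have bits: "\<forall>i<length (bits n). tp i = bits n ! i"
    and sep: "tp (length (bits n)) = 3"
    by (simp_all add: tp_def tape_of_def enc_str_Cons nth_append)
  have "run A parity_checker (Suc (length (bits n))) (0, 0, tp) = Some (q, Suc (length (bits n)), tp)"
  proof (cases "n = 0")
    case True
    then have "step A parity_checker (0, 0, tp) = Some (q, 1, tp)"
      using sep by (intro parity_checker_step) (simp_all add: parity_checker_def q_def)
    then show ?thesis using True by (simp add: run_Suc_Some)
  next
    case False
    then have len: "0 < length (bits n)" by (simp add: bits_nonzero)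
    have "tp 0 = n mod 2 + 1" using bits len bits_nonzero[OF False] by simp
    then have "tp 0 = s" by (auto simp: s_def elim: oddE)
    then have first: "step A parity_checker (0, 0, tp) = Some (s, 1, tp)"
      by (intro parity_checker_step) (auto simp: parity_checker_def s_def)
    have scan: "run A parity_checker (length (bits n) - 1) (s, 1, tp)
                     = Some (s, 1 + (length (bits n) - 1), tp)"
    proof (rule scan_right_keep[where S = "{1, 2}"])
      show "\<forall>i<length (bits n) - 1. tp (1 + i) \<in> {1, 2}"
        using bits bits_nth[of _ n] by simp
    qed (simp_all add: parity_checker_def s_def)
    have last: "step A parity_checker (s, 1 + (length (bits n) - 1), tp) = Some (q, Suc (length (bits n)), tp)"
      using sep len by (intro parity_checker_step) (auto simp: parity_checker_def s_def q_def)
    have "run A parity_checker (1 + (length (bits n) - 1) + 1) (0, 0, tp)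
            = Some (q, Suc (length (bits n)), tp)"
      using run_add_Some[OF run_add_Some[OF run_1[OF first] scan] run_1[OF last]] .
    then show ?thesis using len by simp
  qed
  then show ?thesis unfolding q_def tp_def init_conf_tape_of by blast
qed

lemma parity_checker_read_data:
  "\<exists>t. run A parity_checker t (init_conf (enc_str [n, x]))
        = Some (parity_state n x, Suc (length (bits n)) + length (bits x), tape_of (enc_str [n, x]))"
proof -
  define tp where "tp = tape_of (enc_str [n, x])"
  define q where "q = (if even n then 3 else 5 :: nat)"
  have "tp (Suc (length (bits n)) + i) = bits x ! i" if "i < length (bits x)" for i
    using that by (simp add: tp_def tape_of_def enc_str_Cons nth_append)
  then have data: "\<forall>i<length (bits x). tp (Suc (length (bits n)) + i) \<in> {1, 2}"
    using bits_nth by simp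
  have "run A parity_checker (length (bits x)) (q, Suc (length (bits n)), tp)
      = Some (if even (length (bits x)) then q else Suc q, Suc (length (bits n)) + length (bits x), tp)"
  proof (rule scan_alternating[where S = "{1, 2}"])
    show "\<forall>s\<in>{1, 2}. map_of (delta parity_checker) (q, s) = Some (Suc q, s, True)"
      and "\<forall>s\<in>{1, 2}. map_of (delta parity_checker) (Suc q, s) = Some (q, s, True)"
      by (simp_all add: parity_checker_def q_def)
  qed (use data in \<open>simp_all add: parity_checker_def q_def\<close>)
  moreover obtain t where "run A parity_checker t (init_conf (enc_str [n, x])) = Some (q, Suc (length (bits n)), tp)"
    using parity_checker_read_index unfolding q_def tp_def by blast
  ultimately have "run A parity_checker (t + length (bits x)) (init_conf (enc_str [n, x]))
     = Some (if even (length (bits x)) then q else Suc q, Suc (length (bits n)) + length (bits x), tp)"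
    by (blast intro: run_add_Some)
  moreover have "(if even (length (bits x)) then q else Suc q) = parity_state n x"
    by (simp add: parity_state_def q_def)
  ultimately show ?thesis unfolding tp_def by auto
qed

lemma parity_checker_halts_iff:
  "(\<exists>t c. halts_with {} parity_checker (enc_str [n, x]) t c) \<longleftrightarrow> (even n \<longleftrightarrow> even (length (bits x)))"
proof -
  define p where "p = Suc (length (bits n)) + length (bits x)"
  define tp where "tp = tape_of (enc_str [n, x])"
  obtain t where run: "run {} parity_checker t (init_conf (enc_str [n, x])) = Some (parity_state n x, p, tp)"
    using parity_checker_read_data unfolding p_def tp_def by blast
  have sep: "tp p = 3" and blank: "\<forall>i>p. tp i = 0"
    by (auto simp: p_def tp_def tape_of_def enc_str_Cons nth_append)
  show ?thesis
  proof (cases "even n \<longleftrightarrow> even (length (bits x))")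
    case True
    then have "parity_state n x \<in> {3, 6}" by (auto simp: parity_state_def)
    then have "step {} parity_checker (parity_state n x, p, tp) = None"
      using sep by (auto simp: step_def parity_checker_def)
    then have "halts_with {} parity_checker (enc_str [n, x]) t (parity_state n x, p, tp)"
      using run by (simp add: halts_with_def)
    with True show ?thesis by blast
  next
    case False
    then have "step {} parity_checker (parity_state n x, p, tp) = Some (7, Suc p, tp)"
      using sep by (intro parity_checker_step) (auto simp: parity_checker_def parity_state_def)
    moreover have "run {} parity_checker k (7, Suc p, tp) = Some (7, Suc p + k, tp)" for k
      using blank by (intro scan_right_keep[where S = "{0}"]) (auto simp: parity_checker_def)
    ultimately have loop: "run {} parity_checker (t + Suc k) (init_conf (enc_str [n, x]))
                             = Some (7, Suc p + k, tp)" for k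
      using run_add_Some[OF run, of "Suc k"] by (simp add: run_Suc_Some)
    have "\<not> halts_with {} parity_checker (enc_str [n, x]) t' c" for t' c
    proof
      assume "halts_with {} parity_checker (enc_str [n, x]) t' c"
      then have "run {} parity_checker t' (init_conf (enc_str [n, x])) = Some c"
        and "step {} parity_checker c = None" by (simp_all add: halts_with_def)
      then have "run {} parity_checker (t + Suc t') (init_conf (enc_str [n, x])) = None"
        by (rule run_beyond_halt) simp
      with loop show False by simp
    qed
    with False show ?thesis by blast
  qed
qed

lemma indexed_family_bitlen_family: "indexed_family bitlen_family"
proof -
  have "x \<in> bitlen_family n \<longleftrightarrow> (\<exists>t c. halts_with {} parity_checker (enc_str [n, x]) t c)" for n x
    by (simp only: parity_checker_halts_iff) (simp add: bitlen_family_def even_bitlen_def odd_bitlen_def)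
  then show ?thesis unfolding indexed_family_def by blast
qed

subsection \<open>The family is not learnable without help\<close>

text \<open>In k steps the head never gets beyond cell k, so the first k cells of the input determine
  a run of k steps; queries are harmless since the empty oracle answers them all alike.\<close>

lemma run_local:
  assumes agree: "\<forall>i<N. tp1 i = tp2 i"
  shows "k \<le> N \<Longrightarrow> run {} M k (q0, 0, tp1) = Some (q, h, u1) \<Longrightarrow>
           \<exists>u2. run {} M k (q0, 0, tp2) = Some (q, h, u2) \<and> h \<le> k \<and> (\<forall>i<N. u1 i = u2 i)"
proof (induction k arbitrary: q h u1)
  case 0
  then show ?case using agree by simp
next
  case (Suc k)
  then obtain qa ha ua where ra: "run {} M k (q0, 0, tp1) = Some (qa, ha, ua)"
    and sa: "step {} M (qa, ha, ua) = Some (q, h, u1)"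
    by (cases "run {} M k (q0, 0, tp1)") (auto simp: run_Suc)
  from Suc.IH[OF _ ra] Suc.prems(1) obtain u2 where
    rb: "run {} M k (q0, 0, tp2) = Some (qa, ha, u2)" and "ha \<le> k" and u2: "\<forall>i<N. ua i = u2 i"
    by auto
  then have "ua ha = u2 ha" using Suc.prems(1) by simp
  then have "\<exists>u2'. step {} M (qa, ha, u2) = Some (q, h, u2') \<and> h \<le> Suc k \<and> (\<forall>i<N. u1 i = u2' i)"
    using sa \<open>ha \<le> k\<close> u2 by (auto simp: step_def split: if_splits option.splits)
  with rb show ?case by (auto simp: run_Suc)
qed

lemma step_halt_local:
  "step {} M (q, h, u1) = None \<Longrightarrow> u1 h = u2 h \<Longrightarrow> step {} M (q, h, u2) = None"
  by (auto simp: step_def split: if_splits option.splits)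

lemma tape_is_hypothesis_parity: "tape_is (enc_str [h]) u \<Longrightarrow> u 0 = 2 \<longleftrightarrow> odd h"
  by (cases "h = 0") (auto simp: tape_is_def enc_str_single bits_nonzero elim: oddE)

text \<open>The parity of a hypothesis is read off the first cell of the output.\<close>

lemma lresult_parity_local:
  assumes "lresult {} M \<sigma>1 = Some (h1, t, qs1)" "lresult {} M \<sigma>2 = Some (h2, t2, qs2)"
    and "t < N" "\<forall>i<N. tape_of (enc_str \<sigma>1) i = tape_of (enc_str \<sigma>2) i"
  shows "even h1 \<longleftrightarrow> even h2"
proof -
  from assms(1) obtain q h u1 where halt1: "halts_with {} M (enc_str \<sigma>1) t (q, h, u1)"
    and out1: "tape_is (enc_str [h1]) u1"
    by (auto elim: lresult_SomeD)
  from assms(2) obtain c2 where halt2: "halts_with {} M (enc_str \<sigma>2) t2 c2"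
    and out2: "tape_is (enc_str [h2]) (snd (snd c2))"
    by (auto elim: lresult_SomeD)
  have r1: "run {} M t (0, 0, tape_of (enc_str \<sigma>1)) = Some (q, h, u1)"
    using halt1 by (simp add: halts_with_def init_conf_tape_of)
  obtain u2 where r2: "run {} M t (0, 0, tape_of (enc_str \<sigma>2)) = Some (q, h, u2)"
    and "h \<le> t" and u2: "\<forall>i<N. u1 i = u2 i"
    using run_local[OF assms(4) _ r1] assms(3) by auto
  have "step {} M (q, h, u1) = None" using halt1 by (simp add: halts_with_def)
  then have "step {} M (q, h, u2) = None"
    using step_halt_local u2 \<open>h \<le> t\<close> assms(3) by simp
  with r2 have "halts_with {} M (enc_str \<sigma>2) t (q, h, u2)"
    by (simp add: halts_with_def init_conf_tape_of)
  with halt2 have "c2 = (q, h, u2)" using halts_with_det by blast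
  moreover have "u1 0 = u2 0" using u2 assms(3) by simp
  ultimately show ?thesis
    using tape_is_hypothesis_parity[OF out1] tape_is_hypothesis_parity[OF out2] by simp
qed

lemma lresult_steps_pos:
  assumes "lresult A M \<sigma> = Some (h, t, qs)" "length \<sigma> \<noteq> 1"
  shows "0 < t"
proof (rule ccontr)
  assume "\<not> 0 < t"
  with assms(1) obtain c where "halts_with A M (enc_str \<sigma>) 0 c" "tape_is (enc_str [h]) (snd (snd c))"
    by (auto elim: lresult_SomeD)
  then have "tape_is (enc_str [h]) (tape_of (enc_str \<sigma>))"
    by (auto simp: halts_with_def init_conf_tape_of)
  then have "[h] = \<sigma>" using tape_is_tape_of tape_is_enc_str_unique by blast
  with assms(2) show False by auto
qed

lemma sum_ge_index:
  fixes a :: "nat \<Rightarrow> nat"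
  assumes "\<forall>j\<le>i. j \<noteq> 1 \<longrightarrow> 0 < a j"
  shows "i \<le> (\<Sum>j\<le>i. a j)"
  using assms
proof (induction i)
  case (Suc i)
  then show ?case by (cases "i = 0") auto
qed simp

text \<open>Since every stage except the one on data of length 1 costs a step, convergence happens
  before stage p(mi).\<close>

lemma prt_conv_early:
  assumes conv: "prt_conv F A p (\<lambda>n. lresult B M (prefix_of f n))"
  obtains i h t qs where "i < poly p (mi F A)" "F h = A"
    "\<forall>j\<ge>i. \<exists>t qs. lresult B M (prefix_of f j) = Some (h, t, qs)"
    "lresult B M (prefix_of f i) = Some (h, t, qs)" "t < poly p (mi F A)"
proof -
  define res where "res = (\<lambda>n. lresult B M (prefix_of f n))"
  from conv obtain i where i: "\<forall>j\<ge>i. fst (the (res j)) = fst (the (res i))"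
    "F (fst (the (res i))) = A" "(\<Sum>j\<le>i. fst (snd (the (res j)))) < poly p (mi F A)"
    unfolding prt_conv_def res_def by blast
  have defined: "res j \<noteq> None" for j using prt_conv_defined[OF conv] by (simp add: res_def)
  have "0 < fst (snd (the (res j)))" if "j \<noteq> 1" for j
  proof -
    obtain h t qs where "res j = Some (h, t, qs)" using defined[of j] by auto
    with that show ?thesis using lresult_steps_pos[of B M "prefix_of f j"]
      by (simp add: res_def prefix_of_def)
  qed
  then have "i \<le> (\<Sum>j\<le>i. fst (snd (the (res j))))" by (intro sum_ge_index) blast
  moreover have "fst (snd (the (res i))) \<le> (\<Sum>j\<le>i. fst (snd (the (res j))))"
    by (rule member_le_sum) auto
  moreover obtain h t qs where ri: "res i = Some (h, t, qs)" using defined[of i] by auto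
  moreover have "\<exists>t qs. res j = Some (h, t, qs)" if "i \<le> j" for j
  proof -
    obtain h' t' qs' where "res j = Some (h', t', qs')" using defined[of j] by auto
    moreover have "fst (the (res j)) = h" using i(1) that ri by simp
    ultimately show ?thesis by simp
  qed
  ultimately show ?thesis using that[of i h t qs] i(2,3) unfolding res_def by simp
qed

lemma replicate_power2_tapes_agree:
  assumes "N \<le> k"
  shows "\<forall>i<N. tape_of (enc_str (replicate j ((2::nat) ^ k))) i
             = tape_of (enc_str (replicate j (2 ^ Suc k))) i"
proof (cases j)
  case (Suc j')
  have "tape_of (enc_str (replicate j ((2::nat) ^ m))) i = 1" if "i < m" for i m
    using that Suc by (simp add: tape_of_def enc_str_Cons bits_power2 nth_append)
  with assms show ?thesis by (simp del: power_Suc)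
qed simp

lemma is_enum_padded:
  assumes "a \<in> S"
  shows "is_enum (\<lambda>m. if m < N then a else if m - N \<in> S then m - N else a) S"
  unfolding is_enum_def
proof
  show "range (\<lambda>m. if m < N then a else if m - N \<in> S then m - N else a) \<subseteq> S" using assms by auto
  show "S \<subseteq> range (\<lambda>m. if m < N then a else if m - N \<in> S then m - N else a)"
  proof
    fix x assume "x \<in> S"
    then show "x \<in> range (\<lambda>m. if m < N then a else if m - N \<in> S then m - N else a)"
      by (intro range_eqI[of _ _ "x + N"]) simp
  qed
qed

lemma prefix_of_padded:
  "j \<le> N \<Longrightarrow> prefix_of (\<lambda>m. if m < N then a else g m) j = replicate j a"
  unfolding prefix_of_def by (intro nth_equalityI) auto

lemma converged_parities_agree:
  assumes "ie \<le> N" "\<forall>j\<ge>ie. \<exists>t qs. lresult {} M (\<sigma>e j) = Some (he, t, qs)"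
    "lresult {} M (\<sigma>e ie) = Some (he, te, qse)" "te < N"
    and "io \<le> N" "\<forall>j\<ge>io. \<exists>t qs. lresult {} M (\<sigma>o j) = Some (ho, t, qs)"
    "lresult {} M (\<sigma>o io) = Some (ho, to, qso)" "to < N"
    and agree: "\<And>j. j \<le> N \<Longrightarrow> \<forall>i<N. tape_of (enc_str (\<sigma>e j)) i = tape_of (enc_str (\<sigma>o j)) i"
  shows "even he \<longleftrightarrow> even ho"
proof (cases "io \<le> ie")
  case True
  with assms(6) obtain t qs where "lresult {} M (\<sigma>o ie) = Some (ho, t, qs)" by blast
  from lresult_parity_local[OF assms(3) this assms(4) agree[OF assms(1)]] show ?thesis .
next
  case False
  then have "ie \<le> io" by simp
  with assms(2) obtain t qs where "lresult {} M (\<sigma>e io) = Some (he, t, qs)" by blast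
  moreover have "\<forall>i<N. tape_of (enc_str (\<sigma>o io)) i = tape_of (enc_str (\<sigma>e io)) i"
    using agree[OF assms(5)] by simp
  ultimately have "even ho \<longleftrightarrow> even he" using lresult_parity_local[OF assms(7) _ assms(8)] by blast
  then show ?thesis by simp
qed

lemma bitlen_family_not_PRT: "bitlen_family \<notin> PRT"
proof
  assume "bitlen_family \<in> PRT"
  then obtain M p where conv: "\<forall>A\<in>range bitlen_family. \<forall>f. is_enum f A \<longrightarrow>
      prt_conv bitlen_family A p (\<lambda>n. lresult {} M (prefix_of f n))"
    unfolding PRT_def by blast
  define N where "N = poly p 0 + poly p 1 + 1"
  define k where "k = 2 * N"
  define fe where "fe = (\<lambda>m. if m < N then (2::nat) ^ Suc k else if m - N \<in> even_bitlen then m - N else 2 ^ Suc k)"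
  define fo where "fo = (\<lambda>m. if m < N then (2::nat) ^ k else if m - N \<in> odd_bitlen then m - N else 2 ^ k)"
  have "(2::nat) ^ Suc k \<in> even_bitlen" "(2::nat) ^ k \<in> odd_bitlen"
    by (simp_all add: even_bitlen_def odd_bitlen_def bits_power2 k_def del: power_Suc)
  then have "is_enum fe even_bitlen" "is_enum fo odd_bitlen"
    unfolding fe_def fo_def by (simp_all add: is_enum_padded)
  then have "prt_conv bitlen_family even_bitlen p (\<lambda>n. lresult {} M (prefix_of fe n))"
    and "prt_conv bitlen_family odd_bitlen p (\<lambda>n. lresult {} M (prefix_of fo n))"
    using conv range_bitlen_family by auto
  then obtain ie he te qse io ho to qso where
    ev: "ie < poly p 0" "even he" "\<forall>j\<ge>ie. \<exists>t qs. lresult {} M (prefix_of fe j) = Some (he, t, qs)"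
       "lresult {} M (prefix_of fe ie) = Some (he, te, qse)" "te < poly p 0" and
    od: "io < poly p 1" "odd ho" "\<forall>j\<ge>io. \<exists>t qs. lresult {} M (prefix_of fo j) = Some (ho, t, qs)"
       "lresult {} M (prefix_of fo io) = Some (ho, to, qso)" "to < poly p 1"
    by (elim prt_conv_early)
      (simp add: mi_even_bitlen mi_odd_bitlen bitlen_family_eq_even_bitlen bitlen_family_eq_odd_bitlen)
  have "\<forall>i<N. tape_of (enc_str (prefix_of fe j)) i = tape_of (enc_str (prefix_of fo j)) i"
    if "j \<le> N" for j
    using that replicate_power2_tapes_agree[of N k j]
    by (simp add: fe_def fo_def prefix_of_padded k_def del: power_Suc)
  moreover have "ie \<le> N" "te < N" "io \<le> N" "to < N" using ev(1,5) od(1,5) by (simp_all add: N_def)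
  ultimately have "even he \<longleftrightarrow> even ho"
    using converged_parities_agree[of ie N M "prefix_of fe" he te qse io "prefix_of fo" ho to qso] ev od
    by blast
  with ev(2) od(2) show False by simp
qed

lemma prt_conv_bounded_stages:
  assumes stages: "\<forall>j. \<exists>h' t qs. res j = Some (h', t, qs) \<and> length qs \<le> t \<and> t \<le> c"
    and converged: "\<forall>j\<ge>i. fst (the (res j)) = h" and correct: "F h = A"
    and bound: "Suc i * c < poly p (mi F A)"
  shows "prt_conv F A p res"
proof -
  have steps: "fst (snd (the (res j))) \<le> c" and queries: "length (snd (snd (the (res j)))) \<le> c"
    and defined: "res j \<noteq> None" for j
    using stages[rule_format, of j] by auto
  have "(\<Sum>j\<le>i. fst (snd (the (res j)))) \<le> Suc i * c"
    using sum_bounded_above[of "{..i}" "\<lambda>j. fst (snd (the (res j)))" c] steps by simp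
  moreover have "(\<Sum>j\<le>i. length (snd (snd (the (res j))))) \<le> Suc i * c"
    using sum_bounded_above[of "{..i}" "\<lambda>j. length (snd (snd (the (res j))))" c] queries by simp
  ultimately show ?thesis
    unfolding prt_conv_def using bound defined converged correct
    by (intro exI[of _ i]) (auto simp del: mult_Suc)
qed

definition query_learner :: tm where
  "query_learner =
     \<lparr>delta = map (\<lambda>s. ((0,s),(1,2,True))) [0..<4] @ map (\<lambda>s. ((1,s),(2,3,True))) [0..<4]
               @ map (\<lambda>s. ((2,s),(3,0,False))) [0..<4]
               @ [((3,3),(4,3,False)), ((6,2),(7,3,True)), ((7,3),(8,0,False))],
      qquery = 4, qyes = 5, qno = 6\<rparr>"

lemma query_learner_fields[simp]: "qquery query_learner = 4" "qyes query_learner = 5" "qno query_learner = 6"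
  by (simp_all add: query_learner_def)

lemma map_of_query_learner:
  "map_of (delta query_learner) (q, s) =
     (if q = 0 \<and> s < 4 then Some (1, 2, True) else if q = 1 \<and> s < 4 then Some (2, 3, True)
      else if q = 2 \<and> s < 4 then Some (3, 0, False)
      else map_of [((3,3),(4,3,False)), ((6,2),(7,3,True)), ((7,3),(8,0,False))] (q, s))"
  by (simp add: query_learner_def map_add_def map_of_row split: option.splits)

lemma query_learner_asks:
  fixes \<sigma> :: "nat list"
  defines "tp1 \<equiv> ((tape_of (enc_str \<sigma>))(0 := 2))(1 := 3, 2 := 0)"
  shows "run A query_learner 5 (init_conf (enc_str \<sigma>)) = Some (if 1 \<in> A then 5 else 6, 0, tp1)"
proof -
  define tp where "tp = tape_of (enc_str \<sigma>)"
  have small: "tp i < 4" for i by (simp add: tp_def tape_of_enc_str_less)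
  have "step A query_learner (0, 0, tp) = Some (1, 1, tp(0 := 2))"
    and "step A query_learner (1, 1, tp(0 := 2)) = Some (2, 2, tp(0 := 2, 1 := 3))"
    and "step A query_learner (2, 2, tp(0 := 2, 1 := 3)) = Some (3, 1, tp1)"
    and "step A query_learner (3, 1, tp1) = Some (4, 0, tp1)"
    using small[of 0] small[of 1] small[of 2]
    by (simp_all add: step_def map_of_query_learner tp1_def tp_def fun_upd_twist)
  moreover have "num_at tp1 0 = 1"
  proof -
    have "(LEAST k. tp1 (0 + k) \<notin> {1, 2}) = 1"
    proof (rule Least_equality)
      show "tp1 (0 + y) \<notin> {1, 2} \<Longrightarrow> 1 \<le> y" for y by (cases y) (simp_all add: tp1_def)
    qed (simp add: tp1_def)
    then show ?thesis by (simp add: num_at_def tp1_def)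
  qed
  then have "step A query_learner (4, 0, tp1) = Some (if 1 \<in> A then 5 else 6, 0, tp1)"
    by (simp add: step_def)
  ultimately show ?thesis by (simp add: init_conf_tape_of tp_def run_Suc_Some numeral_eq_Suc)
qed

lemma lresult_query_learner:
  "\<exists>t qs. lresult A query_learner \<sigma> = Some (if 1 \<in> A then 1 else 0, t, qs) \<and> length qs \<le> t \<and> t \<le> 7"
proof -
  define tp1 where "tp1 = ((tape_of (enc_str \<sigma>))(0 := 2))(1 := 3, 2 := 0)"
  have run: "run A query_learner 5 (init_conf (enc_str \<sigma>)) = Some (if 1 \<in> A then 5 else 6, 0, tp1)"
    unfolding tp1_def by (rule query_learner_asks)
  have "\<exists>t c. t \<le> 7 \<and> halts_with A query_learner (enc_str \<sigma>) t c
               \<and> tape_is (enc_str [if 1 \<in> A then 1 else 0]) (snd (snd c))"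
  proof (cases "1 \<in> A")
    case True
    then have "halts_with A query_learner (enc_str \<sigma>) 5 (5, 0, tp1)"
      using run by (simp add: halts_with_def step_def map_of_query_learner tp1_def)
    moreover have "tape_is (enc_str [1]) tp1"
      by (simp add: tape_is_def enc_str_single bits_nonzero tp1_def nth_Cons')
    ultimately show ?thesis using True by (intro exI[of _ 5] exI[of _ "(5, 0, tp1)"]) simp
  next
    case False
    define tp2 where "tp2 = tp1(0 := 3, 1 := 0)"
    have "step A query_learner (6, 0, tp1) = Some (7, 1, tp1(0 := 3))"
      and "step A query_learner (7, 1, tp1(0 := 3)) = Some (8, 0, tp2)"
      by (simp_all add: step_def map_of_query_learner tp1_def tp2_def)
    with run False have "run A query_learner 7 (init_conf (enc_str \<sigma>)) = Some (8, 0, tp2)"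
      using run_add_Some[of A query_learner 5 _ _ 2] by (simp add: numeral_2_eq_2 run_Suc_Some)
    then have "halts_with A query_learner (enc_str \<sigma>) 7 (8, 0, tp2)"
      by (simp add: halts_with_def step_def map_of_query_learner)
    moreover have "tape_is (enc_str [0]) tp2"
      by (simp add: tape_is_def enc_str_single tp2_def tp1_def)
    ultimately show ?thesis using False by (intro exI[of _ 7] exI[of _ "(8, 0, tp2)"]) simp
  qed
  then show ?thesis using lresult_halting length_queries by blast
qed

lemma bitlen_family_PRT_O: "bitlen_family \<in> PRT_O"
  unfolding PRT_O_def
proof (intro CollectI conjI exI[of _ query_learner] exI[of _ "[:8:]"] ballI allI impI)
  fix A f assume "A \<in> range bitlen_family"
  moreover have "1 \<notin> even_bitlen" by (simp add: even_bitlen_def bits_nonzero)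
  ultimately have correct: "bitlen_family (if 1 \<in> A then 1 else 0) = A"
    using one_in_odd_bitlen by (auto simp: range_bitlen_family bitlen_family_def)
  have "fst (the (lresult A query_learner (prefix_of f j))) = (if 1 \<in> A then 1 else 0)" for j
    using lresult_query_learner[of A "prefix_of f j"] by auto
  moreover have "\<forall>j. \<exists>h' t qs. lresult A query_learner (prefix_of f j) = Some (h', t, qs)
                    \<and> length qs \<le> t \<and> t \<le> 7"
    using lresult_query_learner by blast
  ultimately show "prt_conv bitlen_family A [:8:] (\<lambda>n. lresult A query_learner (prefix_of f n))"
    using correct by (intro prt_conv_bounded_stages[where i = 0 and c = 7]) auto
qed (rule indexed_family_bitlen_family)

subsection \<open>A teacher that makes the family learnable\<close>

definition even_head :: "nat list \<Rightarrow> nat list" where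
  "even_head \<sigma> = (case \<sigma> of [] \<Rightarrow> [] | x # _ \<Rightarrow> if even (length (bits x)) then [x] else [])"

text \<open>The machine even_head_teacher marks the first cell (1, 2 become 5, 6) and determines the
  parity of the length of the first number in states 1 and 2. On odd parity it walks back in
  state 3 and blanks the first cell; on even parity it blanks the cell after the terminating 3,
  walks back in state 7 and restores the first cell.\<close>

definition even_head_rows :: "((nat \<times> nat) \<times> (nat \<times> nat \<times> bool)) list" where
  "even_head_rows =
     [((0,3),(9,3,True)), ((0,1),(1,5,True)), ((0,2),(1,6,True)),
      ((1,1),(2,1,True)), ((1,2),(2,2,True)), ((2,1),(1,1,True)), ((2,2),(1,2,True)),
      ((1,3),(3,3,False)), ((3,1),(3,1,False)), ((3,2),(3,2,False)),
      ((3,5),(4,0,True)), ((3,6),(4,0,True)),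
      ((2,3),(5,3,True)), ((6,3),(7,3,False)),
      ((7,1),(7,1,False)), ((7,2),(7,2,False)), ((7,5),(8,1,True)), ((7,6),(8,2,True))]"

definition even_head_teacher :: tm where
  "even_head_teacher =
     \<lparr>delta = map (\<lambda>s. ((9,s),(10,0,True))) [0..<4] @ map (\<lambda>s. ((5,s),(6,0,False))) [0..<4]
               @ even_head_rows,
      qquery = 20, qyes = 21, qno = 22\<rparr>"

lemma qquery_even_head_teacher[simp]: "qquery even_head_teacher = 20"
  by (simp add: even_head_teacher_def)

lemma map_of_even_head_teacher:
  "map_of (delta even_head_teacher) (q, s) =
     (if q = 9 \<and> s < 4 then Some (10, 0, True) else if q = 5 \<and> s < 4 then Some (6, 0, False)
      else map_of even_head_rows (q, s))"
  by (simp add: even_head_teacher_def map_add_def map_of_row split: option.splits)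

lemmas even_head_teacher_table = map_of_even_head_teacher even_head_rows_def

lemma even_head_teacher_empty: "computes_str even_head_teacher (enc_str []) []"
proof -
  have "halts_with {} even_head_teacher (enc_str []) 0 (0, 0, tape_of [])"
    by (simp add: halts_with_def init_conf_tape_of step_def even_head_teacher_table tape_of_def)
  moreover have "tape_is (enc_str []) (tape_of [])" by (simp add: tape_is_def tape_of_def)
  ultimately show ?thesis unfolding computes_str_def by auto
qed

lemma even_head_teacher_zero: "computes_str even_head_teacher (enc_str (0 # r)) [0]"
proof -
  define tp where "tp = tape_of (enc_str (0 # r))"
  have "tp 0 = 3" by (simp add: tp_def enc_str_Cons tape_of_def)
  moreover have "tp 1 < 4" unfolding tp_def by (rule tape_of_enc_str_less)
  have "map_of (delta even_head_teacher) (0, 3) = Some (9, 3, True)"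
    by (simp add: even_head_teacher_table)
  with \<open>tp 0 = 3\<close> have s1: "step {} even_head_teacher (0, 0, tp) = Some (9, 1, tp)"
    by (simp add: step_def fun_upd_idem)
  have "map_of (delta even_head_teacher) (9, tp 1) = Some (10, 0, True)"
    using \<open>tp 1 < 4\<close> by (simp add: map_of_even_head_teacher)
  then have s2: "step {} even_head_teacher (9, 1, tp) = Some (10, 2, tp(1 := 0))"
    by (simp add: step_def)
  have "run {} even_head_teacher 2 (0, 0, tp) = Some (10, 2, tp(1 := 0))"
    using run_add_Some[OF run_1[OF s1] run_1[OF s2]] by (simp only: one_add_one)
  moreover have "step {} even_head_teacher (10, 2, tp(1 := 0)) = None"
    by (simp add: step_def even_head_teacher_table)
  ultimately have "halts_with {} even_head_teacher (enc_str (0 # r)) 2 (10, 2, tp(1 := 0))"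
    by (simp add: halts_with_def init_conf_tape_of tp_def)
  moreover have "tape_is (enc_str [0]) (tp(1 := 0))"
    using \<open>tp 0 = 3\<close> by (simp add: tape_is_def enc_str_single)
  ultimately show ?thesis unfolding computes_str_def by auto
qed

context
  fixes x r and tp :: "nat \<Rightarrow> nat"
  assumes x: "x \<noteq> 0" and tp: "tp = tape_of (enc_str (x # r))"
begin

private abbreviation "len \<equiv> length (bits x)"

private lemma len_pos: "0 < len"
  using x by (simp add: bits_nonzero)

private lemma tape_first: "\<forall>i<len. tp i = bits x ! i" "tp len = 3" "tp i < 4"
  using tape_of_enc_str_less[of "x # r" i] by (simp_all add: tp tape_of_def enc_str_Cons nth_append)

private lemma first_cell: "tp 0 \<in> {1, 2}"
  using tape_first(1) len_pos bits_nth by simp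

lemma even_head_teacher_parity:
  "run {} even_head_teacher len (0, 0, tp) = Some (if even len then 2 else 1, len, tp(0 := tp 0 + 4))"
proof -
  have first: "step {} even_head_teacher (0, 0, tp) = Some (1, 1, tp(0 := tp 0 + 4))"
    using first_cell by (auto simp: step_def even_head_teacher_table)
  have scan: "run {} even_head_teacher (len - 1) (1, 1, tp(0 := tp 0 + 4))
      = Some (if even (len - 1) then 1 else 2, 1 + (len - 1), tp(0 := tp 0 + 4))"
  proof (rule scan_alternating[where S = "{1, 2}"])
    show "\<forall>i<len - 1. (tp(0 := tp 0 + 4)) (1 + i) \<in> {1, 2}"
      using tape_first(1) bits_nth[of _ x] by simp
  qed (simp_all add: even_head_teacher_table)
  have "run {} even_head_teacher (1 + (len - 1)) (0, 0, tp)
      = Some (if even (len - 1) then 1 else 2, 1 + (len - 1), tp(0 := tp 0 + 4))"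
    using run_add_Some[OF run_1[OF first] scan] .
  then show ?thesis using len_pos by (simp add: even_diff_nat)
qed

private lemma marked_tape:
  "(tp(0 := tp 0 + 4)) 0 \<in> {5, 6}" "(tp(0 := tp 0 + 4)) len = 3"
  "\<forall>i. 0 < i \<and> i \<le> len - 1 \<longrightarrow> (tp(0 := tp 0 + 4)) i \<in> {1, 2}"
proof -
  show "(tp(0 := tp 0 + 4)) 0 \<in> {5, 6}" "(tp(0 := tp 0 + 4)) len = 3"
    using first_cell tape_first(2) len_pos by auto
  have "tp i \<in> {1, 2}" if "i \<le> len - 1" for i
  proof -
    have "i < len" using that len_pos by linarith
    then show ?thesis using tape_first(1) bits_nth[of i x] by simp
  qed
  then show "\<forall>i. 0 < i \<and> i \<le> len - 1 \<longrightarrow> (tp(0 := tp 0 + 4)) i \<in> {1, 2}" by simp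
qed

lemma even_head_teacher_odd:
  assumes "odd len"
  shows "computes_str even_head_teacher (enc_str (x # r)) []"
proof -
  define tp1 where "tp1 = tp(0 := tp 0 + 4)"
  have "map_of (delta even_head_teacher) (1, 3) = Some (3, 3, False)"
    by (simp add: even_head_teacher_table)
  then have s1: "step {} even_head_teacher (1, len, tp1) = Some (3, len - 1, tp1)"
    using marked_tape(2) by (simp add: step_def tp1_def fun_upd_idem)
  have scan: "run {} even_head_teacher (len - 1) (3, 0 + (len - 1), tp1) = Some (3, 0, tp1)"
  proof (rule scan_left[where S = "{1, 2}"])
    show "\<forall>s\<in>{1, 2}. map_of (delta even_head_teacher) (3, s) = Some (3, s, False)"
      by (simp add: even_head_teacher_table)
  qed (use marked_tape(3) in \<open>simp_all add: tp1_def\<close>)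
  have "map_of (delta even_head_teacher) (3, tp1 0) = Some (4, 0, True)"
    using marked_tape(1) by (auto simp: even_head_teacher_table tp1_def)
  then have s2: "step {} even_head_teacher (3, 0, tp1) = Some (4, 1, tp1(0 := 0))"
    by (simp add: step_def)
  have "run {} even_head_teacher len (0, 0, tp) = Some (1, len, tp1)"
    using even_head_teacher_parity assms by (simp add: tp1_def)
  then have "run {} even_head_teacher (Suc len) (0, 0, tp) = Some (3, len - 1, tp1)"
    using s1 by (simp add: run_Suc)
  then have "run {} even_head_teacher (Suc len + (len - 1)) (0, 0, tp) = Some (3, 0, tp1)"
    using run_add_Some[OF _ scan[unfolded add_0]] by blast
  then have "run {} even_head_teacher (Suc (Suc len + (len - 1))) (0, 0, tp) = Some (4, 1, tp1(0 := 0))"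
    using s2 by (simp add: run_Suc)
  moreover have "step {} even_head_teacher (4, 1, tp1(0 := 0)) = None"
    by (simp add: step_def even_head_teacher_table)
  moreover have "tape_is (enc_str []) (tp1(0 := 0))" by (simp add: tape_is_def)
  ultimately show ?thesis unfolding computes_str_def halts_with_def
    by (auto simp: init_conf_tape_of tp)
qed

private lemma restored_tape: "tape_is (enc_str [x]) (tp(0 := tp 0 + 4, Suc len := 0, 0 := tp 0))"
  unfolding tape_is_def enc_str_single
proof (intro conjI allI impI)
  fix i assume "i < length (bits x @ [3])"
  then consider "i < len" | "i = len" by fastforce
  then show "(tp(0 := tp 0 + 4, Suc len := 0, 0 := tp 0)) i = (bits x @ [3]) ! i"
    using tape_first(1,2) by cases (auto simp: nth_append)
qed simp

lemma even_head_teacher_even: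
  assumes "even len"
  shows "computes_str even_head_teacher (enc_str (x # r)) [x]"
proof -
  define tp1 where "tp1 = tp(0 := tp 0 + 4)"
  define tp2 where "tp2 = tp1(Suc len := 0)"
  have "map_of (delta even_head_teacher) (2, 3) = Some (5, 3, True)"
    by (simp add: even_head_teacher_table)
  then have s1: "step {} even_head_teacher (2, len, tp1) = Some (5, Suc len, tp1)"
    using marked_tape(2) by (simp add: step_def tp1_def fun_upd_idem)
  have "map_of (delta even_head_teacher) (5, tp1 (Suc len)) = Some (6, 0, False)"
    using tape_first(3)[of "Suc len"] by (simp add: map_of_even_head_teacher tp1_def)
  then have s2: "step {} even_head_teacher (5, Suc len, tp1) = Some (6, len, tp2)"
    by (simp add: step_def tp2_def)
  have "map_of (delta even_head_teacher) (6, 3) = Some (7, 3, False)"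
    by (simp add: even_head_teacher_table)
  then have s3: "step {} even_head_teacher (6, len, tp2) = Some (7, len - 1, tp2)"
    using marked_tape(2) by (simp add: step_def tp1_def tp2_def fun_upd_idem)
  have scan: "run {} even_head_teacher (len - 1) (7, 0 + (len - 1), tp2) = Some (7, 0, tp2)"
  proof (rule scan_left[where S = "{1, 2}"])
    show "\<forall>s\<in>{1, 2}. map_of (delta even_head_teacher) (7, s) = Some (7, s, False)"
      by (simp add: even_head_teacher_table)
  qed (use marked_tape(3) len_pos in \<open>simp_all add: tp1_def tp2_def\<close>)
  have "map_of (delta even_head_teacher) (7, tp2 0) = Some (8, tp 0, True)"
    using first_cell len_pos by (auto simp: even_head_teacher_table tp1_def tp2_def)
  then have s4: "step {} even_head_teacher (7, 0, tp2) = Some (8, 1, tp2(0 := tp 0))"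
    by (simp add: step_def)
  have "run {} even_head_teacher len (0, 0, tp) = Some (2, len, tp1)"
    using even_head_teacher_parity assms by (simp add: tp1_def)
  then have "run {} even_head_teacher (Suc (Suc (Suc len))) (0, 0, tp) = Some (7, len - 1, tp2)"
    using s1 s2 s3 by (simp add: run_Suc)
  then have "run {} even_head_teacher (Suc (Suc (Suc len)) + (len - 1)) (0, 0, tp) = Some (7, 0, tp2)"
    using run_add_Some[OF _ scan[unfolded add_0]] by blast
  then have "run {} even_head_teacher (Suc (Suc (Suc (Suc len)) + (len - 1))) (0, 0, tp)
               = Some (8, 1, tp2(0 := tp 0))"
    using s4 by (simp add: run_Suc)
  moreover have "step {} even_head_teacher (8, 1, tp2(0 := tp 0)) = None"
    by (simp add: step_def even_head_teacher_table)
  moreover have "tape_is (enc_str [x]) (tp2(0 := tp 0))"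
    using restored_tape by (simp add: tp1_def tp2_def)
  ultimately show ?thesis unfolding computes_str_def halts_with_def
    by (auto simp: init_conf_tape_of tp)
qed

end

lemma even_head_teacher_computes: "computes_str even_head_teacher (enc_str \<sigma>) (even_head \<sigma>)"
proof (cases \<sigma>)
  case (Cons x r)
  then show ?thesis
    using even_head_teacher_zero even_head_teacher_odd[OF _ refl] even_head_teacher_even[OF _ refl]
    by (cases "x = 0") (auto simp: even_head_def)
qed (use even_head_teacher_empty in \<open>simp add: even_head_def\<close>)

lemma teacher_even_head_teacher: "teacher even_head_teacher"
  unfolding teacher_def str_out_eq[OF even_head_teacher_computes]
  using even_head_teacher_computes
  by (auto simp: even_head_def prefix_def split: list.splits)

definition empty_data_learner :: tm where
  "empty_data_learner =
     \<lparr>delta = map (\<lambda>s. ((1,s),(2,3,True))) [0..<4] @ map (\<lambda>s. ((2,s),(3,0,True))) [0..<4]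
               @ map (\<lambda>s. ((4,s),(3,0,True))) [0..<4]
               @ [((0,0),(1,2,True)), ((0,1),(4,3,True)), ((0,2),(4,3,True)), ((0,3),(4,3,True))],
      qquery = 9, qyes = 10, qno = 11\<rparr>"

lemma qquery_empty_data_learner[simp]: "qquery empty_data_learner = 9"
  by (simp add: empty_data_learner_def)

lemma map_of_empty_data_learner:
  "map_of (delta empty_data_learner) (q, s) =
     (if q = 1 \<and> s < 4 then Some (2, 3, True) else if q = 2 \<and> s < 4 then Some (3, 0, True)
      else if q = 4 \<and> s < 4 then Some (3, 0, True)
      else map_of [((0,0),(1,2,True)), ((0,1),(4,3,True)), ((0,2),(4,3,True)), ((0,3),(4,3,True))] (q, s))"
  by (simp add: empty_data_learner_def map_add_def map_of_row split: option.splits)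

lemma lresult_empty_data_learner:
  "\<exists>t qs. lresult {} empty_data_learner \<tau> = Some (if \<tau> = [] then 1 else 0, t, qs)
           \<and> length qs \<le> t \<and> t \<le> 3"
proof -
  define tp where "tp = tape_of (enc_str \<tau>)"
  have small: "tp i < 4" for i by (simp add: tp_def tape_of_enc_str_less)
  have "\<exists>t c. t \<le> 3 \<and> halts_with {} empty_data_learner (enc_str \<tau>) t c
               \<and> tape_is (enc_str [if \<tau> = [] then 1 else 0]) (snd (snd c))"
  proof (cases "\<tau> = []")
    case True
    then have "tp i = 0" for i by (simp add: tp_def tape_of_def)
    then have "step {} empty_data_learner (0, 0, tp) = Some (1, 1, tp(0 := 2))"
      and "step {} empty_data_learner (1, 1, tp(0 := 2)) = Some (2, 2, tp(0 := 2, 1 := 3))"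
      and "step {} empty_data_learner (2, 2, tp(0 := 2, 1 := 3)) = Some (3, 3, tp(0 := 2, 1 := 3, 2 := 0))"
      by (simp_all add: step_def map_of_empty_data_learner)
    then have "halts_with {} empty_data_learner (enc_str \<tau>) 3 (3, 3, tp(0 := 2, 1 := 3, 2 := 0))"
      by (simp add: halts_with_def init_conf_tape_of tp_def run_Suc_Some numeral_eq_Suc step_def
          map_of_empty_data_learner)
    moreover have "tape_is (enc_str [1]) (tp(0 := 2, 1 := 3, 2 := 0))"
      by (simp add: tape_is_def enc_str_single bits_nonzero nth_Cons')
    ultimately show ?thesis using True by (intro exI[of _ 3] exI[of _ "(3, 3, tp(0 := 2, 1 := 3, 2 := 0))"]) simp
  next
    case False
    then have "tp 0 \<in> {1, 2, 3}"
      using enc_str_nth[of 0 \<tau>] by (cases \<tau>) (simp_all add: tp_def tape_of_def enc_str_Cons)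
    then have "step {} empty_data_learner (0, 0, tp) = Some (4, 1, tp(0 := 3))"
      and "step {} empty_data_learner (4, 1, tp(0 := 3)) = Some (3, 2, tp(0 := 3, 1 := 0))"
      using small[of 1] by (auto simp: step_def map_of_empty_data_learner)
    then have "halts_with {} empty_data_learner (enc_str \<tau>) 2 (3, 2, tp(0 := 3, 1 := 0))"
      by (simp add: halts_with_def init_conf_tape_of tp_def run_Suc_Some numeral_eq_Suc step_def
          map_of_empty_data_learner)
    moreover have "tape_is (enc_str [0]) (tp(0 := 3, 1 := 0))"
      by (simp add: tape_is_def enc_str_single)
    ultimately show ?thesis using False by (intro exI[of _ 2] exI[of _ "(3, 2, tp(0 := 3, 1 := 0))"]) simp
  qed
  then show ?thesis using lresult_halting length_queries by blast
qed

lemma bitlen_family_learnable_with_teacher: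
  assumes A: "A \<in> range bitlen_family" and "is_enum f A"
  shows "prt_conv bitlen_family A [:7:]
           (\<lambda>n. lresult {} empty_data_learner (str_out even_head_teacher (enc_str (prefix_of f n))))"
proof -
  from assms(2) have "f 0 \<in> A" by (auto simp: is_enum_def)
  define h where "h = (if A = odd_bitlen then 1 else 0 :: nat)"
  define res where "res = (\<lambda>n. lresult {} empty_data_learner (str_out even_head_teacher (enc_str (prefix_of f n))))"
  have "prefix_of f (Suc j) = f 0 # map f [1..<Suc j]" for j
    by (simp add: prefix_of_def upt_conv_Cons del: upt_Suc)
  then have head: "even_head (prefix_of f j) = [] \<longleftrightarrow> A = odd_bitlen" if "1 \<le> j" for j
    using that A \<open>f 0 \<in> A\<close> even_bitlen_ne_odd_bitlen
    by (cases j) (auto simp: even_head_def range_bitlen_family even_bitlen_def odd_bitlen_def)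
  have res: "res j = lresult {} empty_data_learner (even_head (prefix_of f j))" for j
    by (simp add: res_def str_out_eq[OF even_head_teacher_computes])
  have "fst (the (res j)) = h" if "1 \<le> j" for j
  proof -
    obtain t qs where "res j = Some (if even_head (prefix_of f j) = [] then 1 else 0, t, qs)"
      using lresult_empty_data_learner res by metis
    then show ?thesis by (simp only: head[OF that] h_def) simp
  qed
  moreover have "\<forall>j. \<exists>h' t qs. res j = Some (h', t, qs) \<and> length qs \<le> t \<and> t \<le> 3"
    using lresult_empty_data_learner res by metis
  moreover have "bitlen_family h = A"
    using A by (auto simp: h_def range_bitlen_family bitlen_family_def)
  ultimately have "prt_conv bitlen_family A [:7:] res"
    by (intro prt_conv_bounded_stages[where i = 1 and c = 3]) auto
  then show ?thesis by (simp only: res_def)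
qed

lemma bitlen_family_PRT_T: "bitlen_family \<in> PRT_T"
  unfolding PRT_T_def
  using indexed_family_bitlen_family teacher_even_head_teacher bitlen_family_learnable_with_teacher
  by blast

theorem proposition3p5:
  shows "PRT \<subset> PRT_O \<and> PRT_O \<subseteq> PRT_TO \<and> PRT \<subset> PRT_T \<and> PRT_T \<subseteq> PRT_TO"
  using PRT_subset_PRT_O PRT_O_subset_PRT_TO PRT_subset_PRT_T PRT_T_subset_PRT_TO
    bitlen_family_PRT_O bitlen_family_PRT_T bitlen_family_not_PRT
  by blast

end
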